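(* Let $R$ be a commutative ring with finitely many minimal prime ideals which is a multiplication ring; equivalently, $R\cong \prod_{i=1}^{n} D_{i}$ is a finite direct product of rings where each $D_{i}$ is either a Dedekind domain or an Artinian, local principal ideal ring. Let $1=e_1+\cdots+e_n$ be the corresponding decomposition of $1$ into central orthogonal idempotents of $R$ (so $e_iR\cong D_i$). Let $M$ be an $R$-module and write $M=\bigoplus_{i=1}^n M_i$ where $M_i:=e_iM$ (a $D_i$-module). Then $M$ is a multiplication $R$-module if and only if for each $i=1,\ldots,n$ the $D_i$-module $M_i$ is isomorphic to $D_i$, or to $D_i/I_i$ for some nonzero ideal $I_i$ of $D_i$, or (only in the case when $D_i$ is a Dedekind domain) to a nonzero ideal of $D_i$.
   Context: All rings are commutative with $1$ and all modules are unital. A ring $R$ is a multiplication ring if whenever $I,J$ are ideals of $R$ with $J\subseteq I$, there is an ideal $I'$ of $R$ with $J=I'I$. An $R$-module $M$ is a multiplication module if every submodule of $M$ equals $IM$ for some ideal $I$ of $R$. *)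

theory Defs
  imports "HOL-Algebra.Algebra"
begin

definition multiplication_ring :: "('a, 'b) ring_scheme \<Rightarrow> bool" where
  "multiplication_ring R \<longleftrightarrow>
     (\<forall>I J. ideal I R \<longrightarrow> ideal J R \<longrightarrow> J \<subseteq> I \<longrightarrow>
        (\<exists>I'. ideal I' R \<and> J = I' \<cdot>\<^bsub>R\<^esub> I))"

definition minimal_primes :: "('a, 'b) ring_scheme \<Rightarrow> 'a set set" where
  "minimal_primes R =
     {P. primeideal P R \<and> (\<forall>Q. primeideal Q R \<longrightarrow> Q \<subseteq> P \<longrightarrow> Q = P)}"

definition dedekind_domain :: "('a, 'b) ring_scheme \<Rightarrow> bool" where
  "dedekind_domain D \<longleftrightarrow> domain D \<and>
     (\<forall>I. ideal I D \<longrightarrow> I \<noteq> {\<zero>\<^bsub>D\<^esub>} \<longrightarrow> I \<noteq> carrier D \<longrightarrow>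
        (\<exists>Ps. Ps \<noteq> [] \<and> (\<forall>P\<in>set Ps. primeideal P D) \<and>
              I = foldr (ideal_prod D) Ps (carrier D)))"

definition artinian_ring :: "('a, 'b) ring_scheme \<Rightarrow> bool" where
  "artinian_ring D \<longleftrightarrow> ring D \<and>
     \<not> (\<exists>f :: nat \<Rightarrow> 'a set. \<forall>k. ideal (f k) D \<and> f (Suc k) \<subset> f k)"

definition local_ring :: "('a, 'b) ring_scheme \<Rightarrow> bool" where
  "local_ring D \<longleftrightarrow> cring D \<and> (\<exists>!m. maximalideal m D)"

definition principal_ideal_ring :: "('a, 'b) ring_scheme \<Rightarrow> bool" where
  "principal_ideal_ring D \<longleftrightarrow> cring D \<and> (\<forall>I. ideal I D \<longrightarrow> principalideal I D)"

definition artinian_local_PIR :: "('a, 'b) ring_scheme \<Rightarrow> bool" where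
  "artinian_local_PIR D \<longleftrightarrow> artinian_ring D \<and> local_ring D \<and> principal_ideal_ring D"

definition component_ring :: "('a, 'b) ring_scheme \<Rightarrow> 'a \<Rightarrow> ('a, 'b) ring_scheme" where
  "component_ring R e = R\<lparr>carrier := (\<lambda>r. e \<otimes>\<^bsub>R\<^esub> r) ` carrier R, one := e\<rparr>"

inductive_set ideal_smult :: "('a, 'b) ring_scheme \<Rightarrow> 'a set \<Rightarrow> ('a, 'c, 'd) module_scheme \<Rightarrow> 'c set"
  for R I M where
    zero: "\<zero>\<^bsub>M\<^esub> \<in> ideal_smult R I M"
  | smult: "\<lbrakk>a \<in> I; m \<in> carrier M\<rbrakk> \<Longrightarrow> a \<odot>\<^bsub>M\<^esub> m \<in> ideal_smult R I M"
  | add: "\<lbrakk>x \<in> ideal_smult R I M; y \<in> ideal_smult R I M\<rbrakk> \<Longrightarrow> x \<oplus>\<^bsub>M\<^esub> y \<in> ideal_smult R I M"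

definition multiplication_module :: "('a, 'b) ring_scheme \<Rightarrow> ('a, 'c, 'd) module_scheme \<Rightarrow> bool" where
  "multiplication_module R M \<longleftrightarrow>
     (\<forall>N. submodule N R M \<longrightarrow> (\<exists>I. ideal I R \<and> N = ideal_smult R I M))"

definition component_module :: "('a, 'c, 'd) module_scheme \<Rightarrow> 'a \<Rightarrow> ('a, 'c, 'd) module_scheme" where
  "component_module M e = M\<lparr>carrier := (\<lambda>m. e \<odot>\<^bsub>M\<^esub> m) ` carrier M\<rparr>"

text \<open>D as a module over itself, restricted to the carrier I (I = carrier D gives D itself).\<close>
definition ideal_module :: "('a, 'b) ring_scheme \<Rightarrow> 'a set \<Rightarrow> ('a, 'a) module" where
  "ideal_module D I = \<lparr>carrier = I, monoid.mult = monoid.mult D, monoid.one = monoid.one D, ring.zero = ring.zero D,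
                        ring.add = ring.add D, module.smult = monoid.mult D\<rparr>"

definition quotient_module :: "('a, 'b) ring_scheme \<Rightarrow> 'a set \<Rightarrow> ('a, 'a set) module" where
  "quotient_module D I = \<lparr>carrier = carrier (D Quot I), monoid.mult = monoid.mult (D Quot I),
       monoid.one = monoid.one (D Quot I), ring.zero = ring.zero (D Quot I), ring.add = ring.add (D Quot I),
       module.smult = (\<lambda>r C. monoid.mult (D Quot I) (a_r_coset D I r) C)\<rparr>"

definition module_iso ::
  "('a, 'b) ring_scheme \<Rightarrow> ('a, 'c, 'd) module_scheme \<Rightarrow> ('a, 'e, 'f) module_scheme \<Rightarrow> ('c \<Rightarrow> 'e) set" where
  "module_iso D N N' = {f. bij_betw f (carrier N) (carrier N') \<and>
      (\<forall>x\<in>carrier N. \<forall>y\<in>carrier N. f (x \<oplus>\<^bsub>N\<^esub> y) = f x \<oplus>\<^bsub>N'\<^esub> f y) \<and>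
      (\<forall>a\<in>carrier D. \<forall>x\<in>carrier N. f (a \<odot>\<^bsub>N\<^esub> x) = a \<odot>\<^bsub>N'\<^esub> f x)}"

definition module_isomorphic ::
  "('a, 'b) ring_scheme \<Rightarrow> ('a, 'c, 'd) module_scheme \<Rightarrow> ('a, 'e, 'f) module_scheme \<Rightarrow> bool" where
  "module_isomorphic D N N' \<longleftrightarrow> module_iso D N N' \<noteq> {}"

end

theory Submission
  imports Defs
begin

text \<open>
  A submodule \<open>S\<close> of \<open>M\<close> equals \<open>I M\<close> as soon as each component \<open>e\<^sub>i S\<close> equals
  \<open>J\<^sub>i (e\<^sub>i M)\<close>, where \<open>I\<close> is the ideal with components \<open>J\<^sub>i\<close>; hence \<open>M\<close> is a multiplication
  module iff every \<open>e\<^sub>i M\<close> is one over \<open>D\<^sub>i = e\<^sub>i R\<close>, and the question is reduced to a single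
  factor \<open>D\<close>.

  Cyclic modules \<open>D x \<cong> D / Ann x\<close> are multiplication modules, and so is a module isomorphic to an
  ideal \<open>K\<close> of a multiplication ring, its submodules corresponding to ideals \<open>I K \<subseteq> K\<close>.
  Conversely, over an Artinian local principal ideal ring with maximal ideal \<open>(\<pi>)\<close> a
  multiplication module is cyclic: an element outside \<open>\<pi> M\<close> generates \<open>M\<close>, and otherwise
  \<open>M = \<pi>\<^sup>k M = 0\<close>. Over a Dedekind domain, a torsion-free multiplication module embeds into \<open>D\<close>
  as an ideal; a torsion one has annihilator \<open>P\<^sub>1 \<cdots> P\<^sub>k \<noteq> 0\<close> with \<open>P\<^sub>i M \<noteq> M\<close>, and an element
  avoiding all \<open>P\<^sub>i M\<close> generates \<open>M\<close>.
\<close>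

section \<open>Components of rings and modules\<close>

lemma component_ring_simps [simp]:
  "carrier (component_ring R e) = (\<lambda>r. e \<otimes>\<^bsub>R\<^esub> r) ` carrier R"
  "monoid.mult (component_ring R e) = monoid.mult R"
  "monoid.one (component_ring R e) = e"
  "ring.zero (component_ring R e) = ring.zero R"
  "ring.add (component_ring R e) = ring.add R"
  by (simp_all add: component_ring_def)

lemma component_module_simps [simp]:
  "carrier (component_module M e) = (\<lambda>m. e \<odot>\<^bsub>M\<^esub> m) ` carrier M"
  "ring.zero (component_module M e) = ring.zero M"
  "ring.add (component_module M e) = ring.add M"
  "module.smult (component_module M e) = module.smult M"
  by (simp_all add: component_module_def)

lemma ideal_zero_closed: "ideal I R \<Longrightarrow> \<zero>\<^bsub>R\<^esub> \<in> I"
  by (rule additive_subgroup.zero_closed[OF ideal.axioms(1)])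

lemma ideal_add_closed: "ideal I R \<Longrightarrow> x \<in> I \<Longrightarrow> y \<in> I \<Longrightarrow> x \<oplus>\<^bsub>R\<^esub> y \<in> I"
  by (rule additive_subgroup.a_closed[OF ideal.axioms(1)])

lemma ideal_subset: "ideal I R \<Longrightarrow> I \<subseteq> carrier R"
  by (rule additive_subgroup.a_subset[OF ideal.axioms(1)])

context cring
begin

lemma ideal_iff_closed:
  "ideal I R \<longleftrightarrow> I \<subseteq> carrier R \<and> \<zero> \<in> I \<and> (\<forall>x\<in>I. \<forall>y\<in>I. x \<oplus> y \<in> I) \<and>
     (\<forall>a\<in>carrier R. \<forall>x\<in>I. a \<otimes> x \<in> I)"
proof
  assume "ideal I R"
  then interpret ideal I R .
  show "I \<subseteq> carrier R \<and> \<zero> \<in> I \<and> (\<forall>x\<in>I. \<forall>y\<in>I. x \<oplus> y \<in> I) \<and> (\<forall>a\<in>carrier R. \<forall>x\<in>I. a \<otimes> x \<in> I)"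
    by (auto intro: I_l_closed)
next
  assume I: "I \<subseteq> carrier R \<and> \<zero> \<in> I \<and> (\<forall>x\<in>I. \<forall>y\<in>I. x \<oplus> y \<in> I) \<and> (\<forall>a\<in>carrier R. \<forall>x\<in>I. a \<otimes> x \<in> I)"
  have neg: "\<ominus> x \<in> I" if "x \<in> I" for x
  proof -
    have "\<ominus> x = (\<ominus> \<one>) \<otimes> x" using that I by (auto simp: l_minus)
    then show ?thesis using I that by auto
  qed
  show "ideal I R"
  proof (rule idealI[OF ring_axioms])
    show "subgroup I (add_monoid R)"
      by (rule subgroup.intro) (use I neg in \<open>auto simp: a_inv_def[symmetric]\<close>)
  next
    fix a x assume "a \<in> I" "x \<in> carrier R"
    then show "x \<otimes> a \<in> I" "a \<otimes> x \<in> I" using I m_comm[of a x] by auto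
  qed
qed

lemma idempotent_mult_absorb:
  "e \<in> carrier R \<Longrightarrow> e \<otimes> e = e \<Longrightarrow> a \<in> carrier R \<Longrightarrow> e \<otimes> (e \<otimes> a) = e \<otimes> a"
  by (simp add: m_assoc[symmetric])

lemma carrier_component_ring:
  assumes "e \<in> carrier R" "e \<otimes> e = e"
  shows "carrier (component_ring R e) = {r \<in> carrier R. e \<otimes> r = r}"
  using assms by (force simp: m_assoc[symmetric])

lemma cring_component_ring:
  assumes e: "e \<in> carrier R" "e \<otimes> e = e"
  shows "cring (component_ring R e)"
proof -
  let ?D = "component_ring R e"
  have C: "carrier ?D = {r \<in> carrier R. e \<otimes> r = r}" using carrier_component_ring[OF e] .
  have "abelian_group ?D"
  proof (rule abelian_groupI)
    fix x y z assume "x \<in> carrier ?D" "y \<in> carrier ?D" "z \<in> carrier ?D"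
    then show "x \<oplus>\<^bsub>?D\<^esub> y \<oplus>\<^bsub>?D\<^esub> z = x \<oplus>\<^bsub>?D\<^esub> (y \<oplus>\<^bsub>?D\<^esub> z)"
      using C by (simp add: a_assoc)
  next
    fix x y assume "x \<in> carrier ?D" "y \<in> carrier ?D"
    then show "x \<oplus>\<^bsub>?D\<^esub> y = y \<oplus>\<^bsub>?D\<^esub> x" using C by (simp add: a_comm)
  next
    fix x assume x: "x \<in> carrier ?D"
    then have "\<ominus> x \<in> carrier ?D" using C e by (simp add: r_minus)
    then show "\<exists>y\<in>carrier ?D. y \<oplus>\<^bsub>?D\<^esub> x = \<zero>\<^bsub>?D\<^esub>"
      using x C by (intro bexI[of _ "\<ominus> x"]) (simp_all add: l_neg)
  qed (use C e in \<open>auto simp: r_distr\<close>)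
  moreover have "comm_monoid ?D"
  proof (rule comm_monoidI)
    fix x y z assume "x \<in> carrier ?D" "y \<in> carrier ?D" "z \<in> carrier ?D"
    then show "x \<otimes>\<^bsub>?D\<^esub> y \<otimes>\<^bsub>?D\<^esub> z = x \<otimes>\<^bsub>?D\<^esub> (y \<otimes>\<^bsub>?D\<^esub> z)"
      using C by (simp add: m_assoc)
  next
    fix x y assume "x \<in> carrier ?D" "y \<in> carrier ?D"
    then show "x \<otimes>\<^bsub>?D\<^esub> y = y \<otimes>\<^bsub>?D\<^esub> x" using C by (simp add: m_comm)
  qed (use C e in \<open>auto simp: m_assoc[symmetric]\<close>)
  ultimately show ?thesis
    by (rule cringI) (use C in \<open>simp add: l_distr\<close>)
qed

lemma ideal_component_image:
  assumes e: "e \<in> carrier R" "e \<otimes> e = e" and I: "ideal I R"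
  shows "ideal ((\<lambda>a. e \<otimes> a) ` I) (component_ring R e)"
proof -
  interpret I: ideal I R by (rule I)
  interpret D: cring "component_ring R e" by (rule cring_component_ring[OF e])
  show ?thesis
    unfolding D.ideal_iff_closed carrier_component_ring[OF e]
  proof (intro conjI ballI)
    show "(\<lambda>a. e \<otimes> a) ` I \<subseteq> {r \<in> carrier R. e \<otimes> r = r}"
      using e by (auto simp: m_assoc[symmetric])
    show "\<zero>\<^bsub>component_ring R e\<^esub> \<in> (\<lambda>a. e \<otimes> a) ` I"
      using e by (auto intro!: image_eqI[of _ _ \<zero>])
  next
    fix x y assume "x \<in> (\<lambda>a. e \<otimes> a) ` I" "y \<in> (\<lambda>a. e \<otimes> a) ` I"
    then show "x \<oplus>\<^bsub>component_ring R e\<^esub> y \<in> (\<lambda>a. e \<otimes> a) ` I"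
      using e by (auto simp: r_distr[symmetric])
  next
    fix a x assume a: "a \<in> {r \<in> carrier R. e \<otimes> r = r}" and "x \<in> (\<lambda>a. e \<otimes> a) ` I"
    then obtain b where b: "b \<in> I" "x = e \<otimes> b" by auto
    then have "a \<otimes>\<^bsub>component_ring R e\<^esub> x = e \<otimes> (a \<otimes> b)" using a e by (simp add: m_lcomm)
    moreover have "a \<otimes> b \<in> I" using a b(1) by (simp add: I.I_l_closed)
    ultimately show "a \<otimes>\<^bsub>component_ring R e\<^esub> x \<in> (\<lambda>a. e \<otimes> a) ` I" by (rule image_eqI)
  qed
qed

lemma ideal_of_component_ideal:
  assumes e: "e \<in> carrier R" "e \<otimes> e = e" and I: "ideal I (component_ring R e)"
  shows "ideal I R"
proof -
  have Ic: "I \<subseteq> {r \<in> carrier R. e \<otimes> r = r}"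
    using ideal_subset[OF I] by (simp only: carrier_component_ring[OF e])
  show ?thesis
    unfolding ideal_iff_closed
  proof (intro conjI ballI)
    show "I \<subseteq> carrier R" using Ic by auto
    show "\<zero> \<in> I" using ideal_zero_closed[OF I] by simp
  next
    fix x y assume "x \<in> I" "y \<in> I"
    then show "x \<oplus> y \<in> I" using ideal_add_closed[OF I] by simp
  next
    fix a x assume a: "a \<in> carrier R" and x: "x \<in> I"
    have xe: "x \<in> carrier R" "e \<otimes> x = x" using x Ic by auto
    have "(e \<otimes> a) \<otimes> x = a \<otimes> (e \<otimes> x)" using a e xe by (simp add: m_assoc m_lcomm)
    then have "a \<otimes> x = (e \<otimes> a) \<otimes> x" using xe by simp
    moreover have "e \<otimes> a \<in> carrier (component_ring R e)" using a by simp
    ultimately show "a \<otimes> x \<in> I" using ideal.I_l_closed[OF I x] by simp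
  qed
qed

lemma ideal_prod_component_image:
  assumes e: "e \<in> carrier R" "e \<otimes> e = e" and I': "ideal I' R"
    and I: "I \<subseteq> carrier (component_ring R e)"
  shows "I' \<cdot> I = ideal_prod (component_ring R e) ((\<lambda>a. e \<otimes> a) ` I') I"
proof -
  let ?D = "component_ring R e"
  have Ic: "I \<subseteq> {r \<in> carrier R. e \<otimes> r = r}" using I carrier_component_ring[OF e] by simp
  have I'c: "I' \<subseteq> carrier R" by (rule ideal_subset[OF I'])
  have absorb: "(e \<otimes> i) \<otimes> j = i \<otimes> j" if "i \<in> carrier R" "j \<in> I" for i j
  proof -
    have j: "j \<in> carrier R" "e \<otimes> j = j" using that Ic by auto
    have "(e \<otimes> i) \<otimes> j = i \<otimes> (e \<otimes> j)" using j(1) that(1) e by (simp add: m_assoc m_lcomm)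
    then show ?thesis using j by simp
  qed
  show ?thesis
  proof (intro equalityI subsetI)
    fix z assume "z \<in> I' \<cdot> I"
    then show "z \<in> ideal_prod ?D ((\<lambda>a. e \<otimes> a) ` I') I"
    proof induct
      case (prod i j)
      then have "i \<otimes> j = (e \<otimes> i) \<otimes>\<^bsub>?D\<^esub> j" using absorb I'c by auto
      moreover have "e \<otimes> i \<in> (\<lambda>a. e \<otimes> a) ` I'" using prod by auto
      ultimately show ?case using ideal_prod.prod[of "e \<otimes> i" _ j I ?D] prod by simp
    next
      case (sum s1 s2)
      then show ?case using ideal_prod.sum[of s1 ?D _ I s2] by simp
    qed
  next
    fix z assume "z \<in> ideal_prod ?D ((\<lambda>a. e \<otimes> a) ` I') I"
    then show "z \<in> I' \<cdot> I"
    proof induct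
      case (prod i j)
      then obtain b where b: "b \<in> I'" "i = e \<otimes> b" by auto
      then have "i \<otimes>\<^bsub>?D\<^esub> j = b \<otimes> j" using absorb prod I'c by auto
      then show ?case using b prod ideal_prod.prod[of b I' j I R] by simp
    next
      case (sum s1 s2)
      then show ?case using ideal_prod.sum[of s1 R I' I s2] by simp
    qed
  qed
qed

lemma multiplication_ring_component:
  assumes mr: "multiplication_ring R" and e: "e \<in> carrier R" "e \<otimes> e = e"
  shows "multiplication_ring (component_ring R e)"
  unfolding multiplication_ring_def
proof (intro allI impI)
  fix I J assume I: "ideal I (component_ring R e)" and J: "ideal J (component_ring R e)" and JI: "J \<subseteq> I"
  obtain I' where I': "ideal I' R" "J = I' \<cdot> I"
    using mr JI ideal_of_component_ideal[OF e I] ideal_of_component_ideal[OF e J]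
    unfolding multiplication_ring_def by blast
  then show "\<exists>I'. ideal I' (component_ring R e) \<and> J = ideal_prod (component_ring R e) I' I"
    using ideal_prod_component_image[OF e I'(1) ideal_subset[OF I]] ideal_component_image[OF e I'(1)] by auto
qed

end

lemma ideal_smult_ring_irrelevant: "ideal_smult D I M = ideal_smult D' I M"
proof (intro equalityI subsetI)
  fix x assume "x \<in> ideal_smult D I M"
  then show "x \<in> ideal_smult D' I M" by induct (auto intro: ideal_smult.intros)
next
  fix x assume "x \<in> ideal_smult D' I M"
  then show "x \<in> ideal_smult D I M" by induct (auto intro: ideal_smult.intros)
qed

lemma ideal_smult_mono: "I \<subseteq> J \<Longrightarrow> ideal_smult D I M \<subseteq> ideal_smult D J M"
proof
  fix x assume "I \<subseteq> J" and "x \<in> ideal_smult D I M"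
  from this(2) show "x \<in> ideal_smult D J M"
    by induct (use \<open>I \<subseteq> J\<close> in \<open>auto intro: ideal_smult.intros\<close>)
qed

context module
begin

lemma submodule_iff_closed:
  "submodule S R M \<longleftrightarrow> S \<subseteq> carrier M \<and> \<zero>\<^bsub>M\<^esub> \<in> S \<and> (\<forall>x\<in>S. \<forall>y\<in>S. x \<oplus>\<^bsub>M\<^esub> y \<in> S) \<and>
     (\<forall>a\<in>carrier R. \<forall>x\<in>S. a \<odot>\<^bsub>M\<^esub> x \<in> S)"
proof
  assume S: "submodule S R M"
  note closed = submoduleE[OF S]
  obtain x where "x \<in> S" using closed(2) by auto
  then have "\<zero>\<^bsub>M\<^esub> \<in> S" using closed(1) closed(4)[of \<zero> x] by auto
  then show "S \<subseteq> carrier M \<and> \<zero>\<^bsub>M\<^esub> \<in> S \<and> (\<forall>x\<in>S. \<forall>y\<in>S. x \<oplus>\<^bsub>M\<^esub> y \<in> S) \<and>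
     (\<forall>a\<in>carrier R. \<forall>x\<in>S. a \<odot>\<^bsub>M\<^esub> x \<in> S)" using closed by auto
next
  assume S: "S \<subseteq> carrier M \<and> \<zero>\<^bsub>M\<^esub> \<in> S \<and> (\<forall>x\<in>S. \<forall>y\<in>S. x \<oplus>\<^bsub>M\<^esub> y \<in> S) \<and>
     (\<forall>a\<in>carrier R. \<forall>x\<in>S. a \<odot>\<^bsub>M\<^esub> x \<in> S)"
  show "submodule S R M"
  proof (rule submoduleI)
    fix x assume x: "x \<in> S"
    then have "\<ominus>\<^bsub>M\<^esub> x = (\<ominus> \<one>) \<odot>\<^bsub>M\<^esub> x" using S by (subst smult_l_minus) auto
    then show "\<ominus>\<^bsub>M\<^esub> x \<in> S" using S x by auto
  qed (use S in auto)
qed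

lemma ideal_smult_subset: "I \<subseteq> carrier R \<Longrightarrow> ideal_smult D I M \<subseteq> carrier M"
proof
  fix x assume "I \<subseteq> carrier R" and "x \<in> ideal_smult D I M"
  from this(2) show "x \<in> carrier M" by induct (use \<open>I \<subseteq> carrier R\<close> in auto)
qed

lemma submodule_ideal_smult:
  assumes I: "ideal I R"
  shows "submodule (ideal_smult D I M) R M"
  unfolding submodule_iff_closed
proof (intro conjI ballI)
  show "ideal_smult D I M \<subseteq> carrier M" by (rule ideal_smult_subset[OF ideal_subset[OF I]])
  show "\<zero>\<^bsub>M\<^esub> \<in> ideal_smult D I M" by (rule ideal_smult.zero)
  show "x \<oplus>\<^bsub>M\<^esub> y \<in> ideal_smult D I M" if "x \<in> ideal_smult D I M" "y \<in> ideal_smult D I M" for x y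
    using that by (rule ideal_smult.add)
next
  fix a x assume a: "a \<in> carrier R" and "x \<in> ideal_smult D I M"
  from this(2) show "a \<odot>\<^bsub>M\<^esub> x \<in> ideal_smult D I M"
  proof induct
    case (smult b m)
    have "a \<odot>\<^bsub>M\<^esub> (b \<odot>\<^bsub>M\<^esub> m) = (a \<otimes> b) \<odot>\<^bsub>M\<^esub> m"
      using a smult ideal_subset[OF I] by (auto simp: smult_assoc1)
    moreover have "a \<otimes> b \<in> I" using a I smult by (simp add: ideal.I_l_closed)
    ultimately show ?case using smult by (simp add: ideal_smult.smult)
  next
    case (add x y)
    have "x \<in> carrier M" "y \<in> carrier M"
      using add ideal_smult_subset[OF ideal_subset[OF I]] by auto
    then show ?case using a add by (simp add: smult_r_distr ideal_smult.add)
  qed (use a in \<open>auto intro: ideal_smult.zero\<close>)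
qed

lemma finsum_in_submodule:
  assumes S: "submodule S R M" and A: "finite A" and f: "f \<in> A \<rightarrow> S"
  shows "finsum M f A \<in> S"
  using A f
proof (induct A rule: finite_induct)
  case empty
  then show ?case using S by (simp add: submodule_iff_closed)
next
  case (insert a A)
  have "f \<in> A \<rightarrow> carrier M" "f a \<in> carrier M" using insert S by (auto simp: submodule_iff_closed)
  then show ?case using insert S by (simp add: submodule_iff_closed)
qed

lemma finsum_smult_rdistr:
  "\<lbrakk> finite A; f \<in> A \<rightarrow> carrier R; x \<in> carrier M \<rbrakk> \<Longrightarrow>
     (\<Oplus> i \<in> A. f i) \<odot>\<^bsub>M\<^esub> x = (\<Oplus>\<^bsub>M\<^esub> i \<in> A. f i \<odot>\<^bsub>M\<^esub> x)"
proof (induct A rule: finite_induct)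
  case (insert a A)
  then have "f \<in> A \<rightarrow> carrier R" "f a \<in> carrier R" by auto
  then show ?case using insert by (simp add: Pi_def smult_l_distr finsum_closed)
qed simp

lemma carrier_component_module:
  assumes "e \<in> carrier R" "e \<otimes> e = e"
  shows "carrier (component_module M e) = {x \<in> carrier M. e \<odot>\<^bsub>M\<^esub> x = x}"
  using assms by (force simp: smult_assoc1[symmetric])

lemma module_component_module:
  assumes e: "e \<in> carrier R" "e \<otimes> e = e"
  shows "module (component_ring R e) (component_module M e)"
proof -
  let ?D = "component_ring R e" and ?N = "component_module M e"
  have C: "carrier ?D = {r \<in> carrier R. e \<otimes> r = r}" by (rule carrier_component_ring[OF e])
  have CN: "carrier ?N = {x \<in> carrier M. e \<odot>\<^bsub>M\<^esub> x = x}" by (rule carrier_component_module[OF e])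
  have "abelian_group ?N"
  proof (rule abelian_groupI)
    fix x y z assume "x \<in> carrier ?N" "y \<in> carrier ?N" "z \<in> carrier ?N"
    then show "x \<oplus>\<^bsub>?N\<^esub> y \<oplus>\<^bsub>?N\<^esub> z = x \<oplus>\<^bsub>?N\<^esub> (y \<oplus>\<^bsub>?N\<^esub> z)"
      using CN by (simp add: M.a_assoc)
  next
    fix x y assume "x \<in> carrier ?N" "y \<in> carrier ?N"
    then show "x \<oplus>\<^bsub>?N\<^esub> y = y \<oplus>\<^bsub>?N\<^esub> x" using CN by (simp add: M.a_comm)
  next
    fix x assume x: "x \<in> carrier ?N"
    then have "\<ominus>\<^bsub>M\<^esub> x \<in> carrier ?N" using CN e by (simp add: smult_r_minus)
    then show "\<exists>y\<in>carrier ?N. y \<oplus>\<^bsub>?N\<^esub> x = \<zero>\<^bsub>?N\<^esub>"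
      using x CN by (intro bexI[of _ "\<ominus>\<^bsub>M\<^esub> x"]) (simp_all add: M.l_neg)
  qed (use CN e in \<open>auto simp: smult_r_distr\<close>)
  then show ?thesis
  proof (rule moduleI[OF cring_component_ring[OF e]])
    fix a x assume "a \<in> carrier ?D" "x \<in> carrier ?N"
    then show "a \<odot>\<^bsub>?N\<^esub> x \<in> carrier ?N"
      using C CN e by (simp add: smult_assoc1[symmetric] m_comm)
  qed (use C CN in \<open>auto simp: smult_l_distr smult_r_distr smult_assoc1\<close>)
qed

lemma submodule_of_component_submodule:
  assumes e: "e \<in> carrier R" "e \<otimes> e = e"
    and S: "submodule S (component_ring R e) (component_module M e)"
  shows "submodule S R M"
proof -
  interpret N: module "component_ring R e" "component_module M e"
    by (rule module_component_module[OF e])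
  have S': "S \<subseteq> {x \<in> carrier M. e \<odot>\<^bsub>M\<^esub> x = x}" "\<zero>\<^bsub>M\<^esub> \<in> S"
    "\<And>x y. x \<in> S \<Longrightarrow> y \<in> S \<Longrightarrow> x \<oplus>\<^bsub>M\<^esub> y \<in> S"
    "\<And>a x. a \<in> carrier R \<Longrightarrow> e \<otimes> a = a \<Longrightarrow> x \<in> S \<Longrightarrow> a \<odot>\<^bsub>M\<^esub> x \<in> S"
    using S unfolding N.submodule_iff_closed carrier_component_module[OF e]
      carrier_component_ring[OF e] by auto
  have "a \<odot>\<^bsub>M\<^esub> x \<in> S" if "a \<in> carrier R" "x \<in> S" for a x
  proof -
    have "a \<odot>\<^bsub>M\<^esub> x = (e \<otimes> a) \<odot>\<^bsub>M\<^esub> x"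
      using that S'(1) e by (auto simp: m_comm smult_assoc1)
    moreover have "e \<otimes> (e \<otimes> a) = e \<otimes> a" using e that(1) by (rule idempotent_mult_absorb)
    ultimately show ?thesis using S'(4)[of "e \<otimes> a" x] that e by simp
  qed
  then show ?thesis unfolding submodule_iff_closed using S' by auto
qed

lemma component_image_submodule:
  assumes e: "e \<in> carrier R" "e \<otimes> e = e" and S: "submodule S R M"
  shows "submodule ((\<lambda>x. e \<odot>\<^bsub>M\<^esub> x) ` S) (component_ring R e) (component_module M e)"
proof -
  interpret N: module "component_ring R e" "component_module M e"
    by (rule module_component_module[OF e])
  have S': "S \<subseteq> carrier M" "\<zero>\<^bsub>M\<^esub> \<in> S" "\<And>x y. x \<in> S \<Longrightarrow> y \<in> S \<Longrightarrow> x \<oplus>\<^bsub>M\<^esub> y \<in> S"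
    "\<And>a x. a \<in> carrier R \<Longrightarrow> x \<in> S \<Longrightarrow> a \<odot>\<^bsub>M\<^esub> x \<in> S"
    using S unfolding submodule_iff_closed by auto
  show ?thesis
    unfolding N.submodule_iff_closed
  proof (intro conjI ballI)
    show "(\<lambda>x. e \<odot>\<^bsub>M\<^esub> x) ` S \<subseteq> carrier (component_module M e)" using S'(1) by auto
    show "\<zero>\<^bsub>component_module M e\<^esub> \<in> (\<lambda>x. e \<odot>\<^bsub>M\<^esub> x) ` S"
      using S'(2) e by (auto intro!: image_eqI[of _ _ "\<zero>\<^bsub>M\<^esub>"])
  next
    fix x y assume "x \<in> (\<lambda>x. e \<odot>\<^bsub>M\<^esub> x) ` S" "y \<in> (\<lambda>x. e \<odot>\<^bsub>M\<^esub> x) ` S"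
    then obtain x' y' where "x' \<in> S" "y' \<in> S" "x = e \<odot>\<^bsub>M\<^esub> x'" "y = e \<odot>\<^bsub>M\<^esub> y'" by auto
    moreover have "e \<odot>\<^bsub>M\<^esub> x' \<oplus>\<^bsub>M\<^esub> e \<odot>\<^bsub>M\<^esub> y' = e \<odot>\<^bsub>M\<^esub> (x' \<oplus>\<^bsub>M\<^esub> y')"
      if "x' \<in> S" "y' \<in> S" using that S'(1) e by (simp add: smult_r_distr subsetD)
    ultimately show "x \<oplus>\<^bsub>component_module M e\<^esub> y \<in> (\<lambda>x. e \<odot>\<^bsub>M\<^esub> x) ` S"
      using S'(3) by auto
  next
    fix a x assume a: "a \<in> carrier (component_ring R e)" and "x \<in> (\<lambda>x. e \<odot>\<^bsub>M\<^esub> x) ` S"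
    then obtain x' where x': "x' \<in> S" "x = e \<odot>\<^bsub>M\<^esub> x'" by auto
    have ac: "a \<in> carrier R" using a carrier_component_ring[OF e] by auto
    have "a \<odot>\<^bsub>M\<^esub> x = e \<odot>\<^bsub>M\<^esub> (a \<odot>\<^bsub>M\<^esub> x')"
      using x' S'(1) ac e by (auto simp: smult_assoc1[symmetric] m_comm)
    then show "a \<odot>\<^bsub>component_module M e\<^esub> x \<in> (\<lambda>x. e \<odot>\<^bsub>M\<^esub> x) ` S"
      using S'(4) x' ac by auto
  qed
qed

lemma smult_idempotent_split:
  assumes e: "e \<in> carrier R" "e \<otimes> e = e" and a: "a \<in> carrier R" and m: "m \<in> carrier M"
  shows "e \<odot>\<^bsub>M\<^esub> (a \<odot>\<^bsub>M\<^esub> m) = (e \<otimes> a) \<odot>\<^bsub>M\<^esub> (e \<odot>\<^bsub>M\<^esub> m)"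
proof -
  have "(e \<otimes> a) \<otimes> e = e \<otimes> (e \<otimes> a)" using a e by (simp add: m_assoc m_comm[of a e])
  also have "\<dots> = e \<otimes> a" using e a by (rule idempotent_mult_absorb)
  finally show ?thesis using a e m by (metis smult_assoc1 m_closed)
qed

lemma ideal_smult_component_subset:
  assumes "J \<subseteq> I" "e \<in> carrier R"
  shows "ideal_smult D J (component_module M e) \<subseteq> ideal_smult D I M"
proof
  fix x assume "x \<in> ideal_smult D J (component_module M e)"
  then show "x \<in> ideal_smult D I M"
    by induct (use assms in \<open>auto intro: ideal_smult.intros\<close>)
qed

lemma component_image_ideal_smult_subset:
  assumes e: "e \<in> carrier R" "e \<otimes> e = e" and I: "ideal I R"
  shows "(\<lambda>x. e \<odot>\<^bsub>M\<^esub> x) ` ideal_smult D I M \<subseteq> ideal_smult D ((\<lambda>a. e \<otimes> a) ` I) (component_module M e)"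
proof clarify
  have IM: "ideal_smult D I M \<subseteq> carrier M" by (rule ideal_smult_subset[OF ideal_subset[OF I]])
  fix w assume "w \<in> ideal_smult D I M"
  then show "e \<odot>\<^bsub>M\<^esub> w \<in> ideal_smult D ((\<lambda>a. e \<otimes> a) ` I) (component_module M e)"
  proof (induct rule: ideal_smult.induct)
    case zero
    then show ?case using e ideal_smult.zero[of "component_module M e"] by simp
  next
    case (smult a m)
    have "a \<in> carrier R" using smult ideal_subset[OF I] by auto
    then have "e \<odot>\<^bsub>M\<^esub> (a \<odot>\<^bsub>M\<^esub> m) = (e \<otimes> a) \<odot>\<^bsub>M\<^esub> (e \<odot>\<^bsub>M\<^esub> m)"
      using smult e by (simp add: smult_idempotent_split)
    moreover have "e \<otimes> a \<in> (\<lambda>a. e \<otimes> a) ` I" "e \<odot>\<^bsub>M\<^esub> m \<in> carrier (component_module M e)"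
      using smult by auto
    ultimately show ?case
      using ideal_smult.smult[of "e \<otimes> a" _ "e \<odot>\<^bsub>M\<^esub> m" "component_module M e" D] by simp
  next
    case (add x y)
    then have "e \<odot>\<^bsub>M\<^esub> (x \<oplus>\<^bsub>M\<^esub> y) = e \<odot>\<^bsub>M\<^esub> x \<oplus>\<^bsub>component_module M e\<^esub> e \<odot>\<^bsub>M\<^esub> y"
      using IM e by (simp add: smult_r_distr subsetD)
    then show ?case
      using add ideal_smult.add[of "e \<odot>\<^bsub>M\<^esub> x" D _ "component_module M e" "e \<odot>\<^bsub>M\<^esub> y"] by simp
  qed
qed

lemma ideal_smult_component_image_subset:
  assumes e: "e \<in> carrier R" "e \<otimes> e = e" and I: "ideal I R"
  shows "ideal_smult D ((\<lambda>a. e \<otimes> a) ` I) (component_module M e) \<subseteq> (\<lambda>x. e \<odot>\<^bsub>M\<^esub> x) ` ideal_smult D I M"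
proof
  have IM: "ideal_smult D I M \<subseteq> carrier M" by (rule ideal_smult_subset[OF ideal_subset[OF I]])
  fix z assume "z \<in> ideal_smult D ((\<lambda>a. e \<otimes> a) ` I) (component_module M e)"
  then show "z \<in> (\<lambda>x. e \<odot>\<^bsub>M\<^esub> x) ` ideal_smult D I M"
  proof (induct rule: ideal_smult.induct)
    case zero
    then show ?case using e by (auto intro!: image_eqI[of _ _ "\<zero>\<^bsub>M\<^esub>"] ideal_smult.zero)
  next
    case (smult j y)
    then obtain b m where b: "b \<in> I" "j = e \<otimes> b" and m: "m \<in> carrier M" "y = e \<odot>\<^bsub>M\<^esub> m" by auto
    have "j \<odot>\<^bsub>component_module M e\<^esub> y = e \<odot>\<^bsub>M\<^esub> (b \<odot>\<^bsub>M\<^esub> (e \<odot>\<^bsub>M\<^esub> m))"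
      using b m e ideal_subset[OF I] by (auto simp: smult_assoc1)
    moreover have "b \<odot>\<^bsub>M\<^esub> (e \<odot>\<^bsub>M\<^esub> m) \<in> ideal_smult D I M"
      using b(1) m e by (simp add: ideal_smult.smult)
    ultimately show ?case by (rule image_eqI)
  next
    case (add x y)
    then obtain x' y' where "x' \<in> ideal_smult D I M" "y' \<in> ideal_smult D I M"
      "x = e \<odot>\<^bsub>M\<^esub> x'" "y = e \<odot>\<^bsub>M\<^esub> y'" by auto
    then have "x \<oplus>\<^bsub>component_module M e\<^esub> y = e \<odot>\<^bsub>M\<^esub> (x' \<oplus>\<^bsub>M\<^esub> y')"
      and "x' \<oplus>\<^bsub>M\<^esub> y' \<in> ideal_smult D I M"
      using IM e by (simp_all add: smult_r_distr subsetD ideal_smult.add)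
    then show ?case by (rule image_eqI)
  qed
qed

lemma component_image_ideal_smult:
  assumes e: "e \<in> carrier R" "e \<otimes> e = e" and I: "ideal I R"
  shows "(\<lambda>x. e \<odot>\<^bsub>M\<^esub> x) ` ideal_smult D I M
    = ideal_smult D ((\<lambda>a. e \<otimes> a) ` I) (component_module M e)"
  using component_image_ideal_smult_subset[OF e I] ideal_smult_component_image_subset[OF e I] by blast

lemma multiplication_module_component:
  assumes e: "e \<in> carrier R" "e \<otimes> e = e" and mm: "multiplication_module R M"
  shows "multiplication_module (component_ring R e) (component_module M e)"
  unfolding multiplication_module_def
proof (intro allI impI)
  fix S assume S: "submodule S (component_ring R e) (component_module M e)"
  then obtain I where I: "ideal I R" "S = ideal_smult R I M"
    using mm submodule_of_component_submodule[OF e S] unfolding multiplication_module_def by blast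
  have "S \<subseteq> carrier (component_module M e)"
    by (rule module.submoduleE(1)[OF module_component_module[OF e] S])
  then have "\<And>x. x \<in> S \<Longrightarrow> e \<odot>\<^bsub>M\<^esub> x = x" unfolding carrier_component_module[OF e] by blast
  then have "S = (\<lambda>x. e \<odot>\<^bsub>M\<^esub> x) ` S"
    using image_cong[OF refl, of S "\<lambda>x. e \<odot>\<^bsub>M\<^esub> x" "\<lambda>x. x"] by simp
  also have "\<dots> = (\<lambda>x. e \<odot>\<^bsub>M\<^esub> x) ` ideal_smult R I M" using I(2) by simp
  also have "\<dots> = ideal_smult (component_ring R e) ((\<lambda>a. e \<otimes> a) ` I) (component_module M e)"
    unfolding component_image_ideal_smult[OF e I(1)] by (rule ideal_smult_ring_irrelevant)
  finally show "\<exists>J. ideal J (component_ring R e) \<and> S = ideal_smult (component_ring R e) J (component_module M e)"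
    using ideal_component_image[OF e I(1)] by blast
qed

end

section \<open>Idempotent decompositions\<close>

locale idempotent_decomposition = cring R for R (structure) +
  fixes n :: nat and e :: "nat \<Rightarrow> 'a"
  assumes idempotents: "\<forall>i<n. e i \<in> carrier R \<and> e i \<otimes> e i = e i"
    and orthogonal: "\<forall>i<n. \<forall>j<n. i \<noteq> j \<longrightarrow> e i \<otimes> e j = \<zero>"
    and sum_one: "finsum R e {..<n} = \<one>"
begin

lemma idempotent: "i < n \<Longrightarrow> e i \<in> carrier R" "i < n \<Longrightarrow> e i \<otimes> e i = e i"
  using idempotents by auto

text \<open>Under \<open>R \<cong> e\<^sub>1 R \<times> \<cdots> \<times> e\<^sub>n R\<close> this is the ideal \<open>J\<^sub>1 \<times> \<cdots> \<times> J\<^sub>n\<close>.\<close>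

definition ideal_of_components :: "(nat \<Rightarrow> 'a set) \<Rightarrow> 'a set" where
  "ideal_of_components J = {r \<in> carrier R. \<forall>i<n. e i \<otimes> r \<in> J i}"

lemma ideal_ideal_of_components:
  assumes J: "\<And>i. i < n \<Longrightarrow> ideal (J i) (component_ring R (e i))"
  shows "ideal (ideal_of_components J) R"
  unfolding ideal_iff_closed ideal_of_components_def
proof (intro conjI ballI)
  show "\<zero> \<in> {r \<in> carrier R. \<forall>i<n. e i \<otimes> r \<in> J i}"
    using ideal_zero_closed[OF J] idempotent by simp
next
  fix x y assume "x \<in> {r \<in> carrier R. \<forall>i<n. e i \<otimes> r \<in> J i}" "y \<in> {r \<in> carrier R. \<forall>i<n. e i \<otimes> r \<in> J i}"
  then show "x \<oplus> y \<in> {r \<in> carrier R. \<forall>i<n. e i \<otimes> r \<in> J i}"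
    using ideal_add_closed[OF J] idempotent by (simp add: r_distr)
next
  fix a x assume a: "a \<in> carrier R" and x: "x \<in> {r \<in> carrier R. \<forall>i<n. e i \<otimes> r \<in> J i}"
  have "e i \<otimes> (a \<otimes> x) \<in> J i" if i: "i < n" for i
  proof -
    have xc: "x \<in> carrier R" using x by simp
    have "(e i \<otimes> a) \<otimes> (e i \<otimes> x) = e i \<otimes> (e i \<otimes> (a \<otimes> x))"
      using idempotent[OF i] a xc by (simp add: m_assoc m_lcomm[of a])
    then have "e i \<otimes> (a \<otimes> x) = (e i \<otimes> a) \<otimes> (e i \<otimes> x)"
      using idempotent[OF i] a xc by (simp add: idempotent_mult_absorb)
    moreover have "e i \<otimes> a \<in> carrier (component_ring R (e i))" using a by simp
    ultimately show ?thesis using ideal.I_l_closed[OF J[OF i]] x i by simp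
  qed
  then show "a \<otimes> x \<in> {r \<in> carrier R. \<forall>i<n. e i \<otimes> r \<in> J i}" using a x by simp
qed auto

lemma component_ideal_subset_ideal_of_components:
  assumes J: "\<And>i. i < n \<Longrightarrow> ideal (J i) (component_ring R (e i))" and i: "i < n"
  shows "J i \<subseteq> ideal_of_components J"
proof
  fix j assume j: "j \<in> J i"
  then have jc: "j \<in> carrier R" "e i \<otimes> j = j"
    using ideal_subset[OF J[OF i]] carrier_component_ring[OF idempotent[OF i]] by auto
  have "e k \<otimes> j \<in> J k" if k: "k < n" for k
  proof (cases "k = i")
    case False
    have "e k \<otimes> j = (e k \<otimes> e i) \<otimes> j" using jc idempotent i k by (metis m_assoc)
    also have "\<dots> = \<zero>" using orthogonal False i k jc by simp
    finally show ?thesis using ideal_zero_closed[OF J[OF k]] by simp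
  qed (use j jc in simp)
  then show "j \<in> ideal_of_components J" unfolding ideal_of_components_def using jc by simp
qed

lemma sum_component_images:
  assumes M: "module R M" and x: "x \<in> carrier M"
  shows "x = (\<Oplus>\<^bsub>M\<^esub> i \<in> {..<n}. e i \<odot>\<^bsub>M\<^esub> x)"
proof -
  interpret module R M by (rule M)
  have "e \<in> {..<n} \<rightarrow> carrier R" using idempotent by auto
  then have "finsum R e {..<n} \<odot>\<^bsub>M\<^esub> x = (\<Oplus>\<^bsub>M\<^esub> i \<in> {..<n}. e i \<odot>\<^bsub>M\<^esub> x)"
    by (rule finsum_smult_rdistr[OF finite_lessThan _ x])
  then show ?thesis using x unfolding sum_one by simp
qed

lemma subset_ideal_smult_of_components:
  assumes M: "module R M" and J: "\<And>i. i < n \<Longrightarrow> ideal (J i) (component_ring R (e i))"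
    and S: "S \<subseteq> carrier M"
    and eS: "\<And>i x. i < n \<Longrightarrow> x \<in> S \<Longrightarrow> e i \<odot>\<^bsub>M\<^esub> x \<in> ideal_smult R (J i) (component_module M (e i))"
  shows "S \<subseteq> ideal_smult R (ideal_of_components J) M"
proof
  interpret module R M by (rule M)
  fix x assume x: "x \<in> S"
  have "e i \<odot>\<^bsub>M\<^esub> x \<in> ideal_smult R (ideal_of_components J) M" if i: "i < n" for i
    using eS[OF i x] ideal_smult_component_subset[OF component_ideal_subset_ideal_of_components[OF J i]]
      idempotent(1)[OF i] by blast
  then have "(\<Oplus>\<^bsub>M\<^esub> i \<in> {..<n}. e i \<odot>\<^bsub>M\<^esub> x) \<in> ideal_smult R (ideal_of_components J) M"
    by (intro finsum_in_submodule[OF submodule_ideal_smult[OF ideal_ideal_of_components[OF J]]]) auto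
  then show "x \<in> ideal_smult R (ideal_of_components J) M" using sum_component_images[OF M] x S by auto
qed

lemma ideal_smult_of_components_subset:
  assumes M: "module R M" and S: "submodule S R M"
    and JS: "\<And>i. i < n \<Longrightarrow> ideal_smult R (J i) (component_module M (e i)) \<subseteq> (\<lambda>x. e i \<odot>\<^bsub>M\<^esub> x) ` S"
  shows "ideal_smult R (ideal_of_components J) M \<subseteq> S"
proof
  interpret module R M by (rule M)
  have S': "\<And>a x. a \<in> carrier R \<Longrightarrow> x \<in> S \<Longrightarrow> a \<odot>\<^bsub>M\<^esub> x \<in> S"
    using S unfolding submodule_iff_closed by auto
  fix w assume "w \<in> ideal_smult R (ideal_of_components J) M"
  then show "w \<in> S"
  proof induct
    case (smult r m)
    have r: "r \<in> carrier R" "\<And>i. i < n \<Longrightarrow> e i \<otimes> r \<in> J i"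
      using smult(1) unfolding ideal_of_components_def by auto
    have "e i \<odot>\<^bsub>M\<^esub> (r \<odot>\<^bsub>M\<^esub> m) \<in> S" if i: "i < n" for i
    proof -
      have "(e i \<otimes> r) \<odot>\<^bsub>M\<^esub> (e i \<odot>\<^bsub>M\<^esub> m) \<in> ideal_smult R (J i) (component_module M (e i))"
        using ideal_smult.smult[of "e i \<otimes> r" "J i" "e i \<odot>\<^bsub>M\<^esub> m" "component_module M (e i)" R]
          r(2)[OF i] smult(2) by simp
      then obtain s where "s \<in> S" "e i \<odot>\<^bsub>M\<^esub> (r \<odot>\<^bsub>M\<^esub> m) = e i \<odot>\<^bsub>M\<^esub> s"
        using JS[OF i] smult_idempotent_split[OF idempotent[OF i] r(1) smult(2)] by auto
      then show ?thesis using S' idempotent[OF i] by simp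
    qed
    then have "(\<Oplus>\<^bsub>M\<^esub> i \<in> {..<n}. e i \<odot>\<^bsub>M\<^esub> (r \<odot>\<^bsub>M\<^esub> m)) \<in> S"
      by (intro finsum_in_submodule[OF S]) auto
    then show ?case using sum_component_images[OF M, of "r \<odot>\<^bsub>M\<^esub> m"] r(1) smult(2) by simp
  qed (use S in \<open>simp_all add: submodule_iff_closed\<close>)
qed

lemma multiplication_module_if_components:
  assumes M: "module R M"
    and mm: "\<forall>i<n. multiplication_module (component_ring R (e i)) (component_module M (e i))"
  shows "multiplication_module R M"
  unfolding multiplication_module_def
proof (intro allI impI)
  interpret module R M by (rule M)
  fix S assume S: "submodule S R M"
  have "\<forall>i\<in>{..<n}. \<exists>J. ideal J (component_ring R (e i)) \<and>
      (\<lambda>x. e i \<odot>\<^bsub>M\<^esub> x) ` S = ideal_smult R J (component_module M (e i))"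
    using mm component_image_submodule[OF idempotent S] ideal_smult_ring_irrelevant
    unfolding multiplication_module_def by (metis lessThan_iff)
  then obtain J where J: "\<And>i. i < n \<Longrightarrow> ideal (J i) (component_ring R (e i))"
    and eS: "\<And>i. i < n \<Longrightarrow> (\<lambda>x. e i \<odot>\<^bsub>M\<^esub> x) ` S = ideal_smult R (J i) (component_module M (e i))"
    by (metis lessThan_iff bchoice)
  have "S \<subseteq> ideal_smult R (ideal_of_components J) M"
    using subset_ideal_smult_of_components[OF M J] S eS unfolding submodule_iff_closed by blast
  moreover have "ideal_smult R (ideal_of_components J) M \<subseteq> S"
    using ideal_smult_of_components_subset[OF M S] eS by blast
  ultimately show "\<exists>I. ideal I R \<and> S = ideal_smult R I M" using ideal_ideal_of_components[OF J] by blast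
qed

lemma multiplication_module_iff_components:
  assumes M: "module R M"
  shows "multiplication_module R M \<longleftrightarrow>
    (\<forall>i<n. multiplication_module (component_ring R (e i)) (component_module M (e i)))"
  using module.multiplication_module_component[OF M idempotent] multiplication_module_if_components[OF M]
  by blast

end

section \<open>Cyclic modules\<close>

definition cyclic_generator :: "('a, 'b) ring_scheme \<Rightarrow> ('a, 'c, 'd) module_scheme \<Rightarrow> 'c \<Rightarrow> bool" where
  "cyclic_generator R M x \<longleftrightarrow> x \<in> carrier M \<and> (\<forall>y\<in>carrier M. \<exists>a\<in>carrier R. y = a \<odot>\<^bsub>M\<^esub> x)"

lemma cyclic_generator_iso:
  assumes N: "module D N" and f: "f \<in> module_iso D N T" and g: "cyclic_generator D T g"
  shows "\<exists>x. cyclic_generator D N x"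
proof -
  interpret module D N by (rule N)
  have bij: "bij_betw f (carrier N) (carrier T)"
    and lin: "\<forall>a\<in>carrier D. \<forall>x\<in>carrier N. f (a \<odot>\<^bsub>N\<^esub> x) = a \<odot>\<^bsub>T\<^esub> f x"
    using f unfolding module_iso_def by auto
  obtain x where x: "x \<in> carrier N" "f x = g"
    using bij g unfolding cyclic_generator_def bij_betw_def by (metis imageE)
  have "\<exists>d\<in>carrier D. y = d \<odot>\<^bsub>N\<^esub> x" if y: "y \<in> carrier N" for y
  proof -
    have "f y \<in> carrier T" using bij y unfolding bij_betw_def by auto
    then obtain d where d: "d \<in> carrier D" "f y = d \<odot>\<^bsub>T\<^esub> g"
      using g unfolding cyclic_generator_def by auto
    then have "f y = f (d \<odot>\<^bsub>N\<^esub> x)" using lin x by auto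
    then have "y = d \<odot>\<^bsub>N\<^esub> x" using bij y d x unfolding bij_betw_def inj_on_def by auto
    then show ?thesis using d by auto
  qed
  then show ?thesis using x unfolding cyclic_generator_def by auto
qed

lemma cyclic_generator_ring_module:
  assumes "cring D"
  shows "cyclic_generator D (ideal_module D (carrier D)) \<one>\<^bsub>D\<^esub>"
proof -
  interpret cring D by fact
  show ?thesis by (auto simp: cyclic_generator_def ideal_module_def)
qed

lemma cyclic_generator_quotient_module:
  assumes "cring D" "ideal I D"
  shows "cyclic_generator D (quotient_module D I) (I +>\<^bsub>D\<^esub> \<one>\<^bsub>D\<^esub>)"
proof -
  interpret cring D by fact
  interpret ideal I D by fact
  have "\<forall>t\<in>carrier (quotient_module D I). \<exists>d\<in>carrier D. t = d \<odot>\<^bsub>quotient_module D I\<^esub> (I +>\<^bsub>D\<^esub> \<one>\<^bsub>D\<^esub>)"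
  proof
    fix t assume "t \<in> carrier (quotient_module D I)"
    then obtain d where d: "d \<in> carrier D" "t = I +>\<^bsub>D\<^esub> d"
      by (auto simp: quotient_module_def FactRing_def A_RCOSETS_def')
    then have "d \<odot>\<^bsub>quotient_module D I\<^esub> (I +>\<^bsub>D\<^esub> \<one>\<^bsub>D\<^esub>) = t"
      using rcoset_mult_add[of d "\<one>\<^bsub>D\<^esub>"] by (simp add: quotient_module_def FactRing_def)
    then show "\<exists>d\<in>carrier D. t = d \<odot>\<^bsub>quotient_module D I\<^esub> (I +>\<^bsub>D\<^esub> \<one>\<^bsub>D\<^esub>)" using d by metis
  qed
  moreover have "I +>\<^bsub>D\<^esub> \<one>\<^bsub>D\<^esub> \<in> carrier (quotient_module D I)"
    by (auto simp: quotient_module_def FactRing_def A_RCOSETS_def')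
  ultimately show ?thesis unfolding cyclic_generator_def by blast
qed

lemma (in abelian_group) minus_eq_zero_iff:
  "a \<in> carrier G \<Longrightarrow> b \<in> carrier G \<Longrightarrow> a \<oplus> \<ominus> b = \<zero> \<longleftrightarrow> a = b"
  by (metis a_assoc l_neg r_neg r_zero a_inv_closed)

context module
begin

lemma ideal_linear_image:
  assumes S: "submodule S R M" and f: "\<And>x. x \<in> carrier M \<Longrightarrow> f x \<in> carrier R"
    and add: "\<And>x y. x \<in> carrier M \<Longrightarrow> y \<in> carrier M \<Longrightarrow> f (x \<oplus>\<^bsub>M\<^esub> y) = f x \<oplus> f y"
    and lin: "\<And>a x. a \<in> carrier R \<Longrightarrow> x \<in> carrier M \<Longrightarrow> f (a \<odot>\<^bsub>M\<^esub> x) = a \<otimes> f x"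
  shows "ideal (f ` S) R"
proof -
  have S': "S \<subseteq> carrier M" "\<zero>\<^bsub>M\<^esub> \<in> S" "\<And>x y. x \<in> S \<Longrightarrow> y \<in> S \<Longrightarrow> x \<oplus>\<^bsub>M\<^esub> y \<in> S"
    "\<And>a x. a \<in> carrier R \<Longrightarrow> x \<in> S \<Longrightarrow> a \<odot>\<^bsub>M\<^esub> x \<in> S"
    using S unfolding submodule_iff_closed by auto
  have "f \<zero>\<^bsub>M\<^esub> = \<zero>" using lin[of \<zero> "\<zero>\<^bsub>M\<^esub>"] f[of "\<zero>\<^bsub>M\<^esub>"] by simp
  show ?thesis unfolding ideal_iff_closed
  proof (intro conjI ballI)
    show "f ` S \<subseteq> carrier R" using S'(1) f by blast
    show "\<zero> \<in> f ` S" using S'(2) \<open>f \<zero>\<^bsub>M\<^esub> = \<zero>\<close> by (metis image_eqI)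
  next
    fix x y assume "x \<in> f ` S" "y \<in> f ` S"
    then obtain x' y' where xy: "x' \<in> S" "y' \<in> S" "x = f x'" "y = f y'" by auto
    then have "x' \<in> carrier M" "y' \<in> carrier M" using S'(1) by auto
    then have "x \<oplus> y = f (x' \<oplus>\<^bsub>M\<^esub> y')" using add xy by simp
    then show "x \<oplus> y \<in> f ` S" using S'(3) xy by auto
  next
    fix a x assume a: "a \<in> carrier R" and "x \<in> f ` S"
    then obtain x' where x: "x' \<in> S" "x = f x'" by auto
    then have "a \<otimes> x = f (a \<odot>\<^bsub>M\<^esub> x')" using S'(1) lin a by auto
    then show "a \<otimes> x \<in> f ` S" using S'(4) x a by auto
  qed
qed

definition annihilator :: "'c \<Rightarrow> 'a set" where
  "annihilator x = {a \<in> carrier R. a \<odot>\<^bsub>M\<^esub> x = \<zero>\<^bsub>M\<^esub>}"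

lemma annihilator_ideal: "x \<in> carrier M \<Longrightarrow> ideal (annihilator x) R"
  unfolding ideal_iff_closed annihilator_def by (auto simp: smult_l_distr smult_assoc1)

lemma smult_eq_iff_diff_in_annihilator:
  assumes x: "x \<in> carrier M" and d: "d \<in> carrier R" "d' \<in> carrier R"
  shows "d \<odot>\<^bsub>M\<^esub> x = d' \<odot>\<^bsub>M\<^esub> x \<longleftrightarrow> d \<ominus> d' \<in> annihilator x"
proof -
  have "(d \<ominus> d') \<odot>\<^bsub>M\<^esub> x = d \<odot>\<^bsub>M\<^esub> x \<oplus>\<^bsub>M\<^esub> \<ominus>\<^bsub>M\<^esub> (d' \<odot>\<^bsub>M\<^esub> x)"
    using assms by (simp add: R.minus_eq smult_l_distr smult_l_minus)
  then show ?thesis unfolding annihilator_def using assms M.minus_eq_zero_iff by auto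
qed

lemma smult_inj_if_annihilator_zero:
  assumes x: "x \<in> carrier M" and A: "annihilator x = {\<zero>}"
    and d: "d \<in> carrier R" "d' \<in> carrier R" "d \<odot>\<^bsub>M\<^esub> x = d' \<odot>\<^bsub>M\<^esub> x"
  shows "d = d'"
proof -
  have "d \<ominus> d' = \<zero>" using smult_eq_iff_diff_in_annihilator[OF x d(1,2)] d(3) A by auto
  then show ?thesis using d R.minus_eq_zero_iff by (simp add: R.minus_eq)
qed

text \<open>Reading \<open>a y \<in> R m \<cong> R\<close> off in coordinates embeds \<open>M\<close> into \<open>R\<close> as an ideal containing \<open>a\<close>.\<close>

lemma iso_ideal_if_smult_embeds_in_free_cyclic:
  assumes m: "m \<in> carrier M" "annihilator m = {\<zero>}" and a: "a \<in> carrier R"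
    and into: "\<And>y. y \<in> carrier M \<Longrightarrow> \<exists>d\<in>carrier R. a \<odot>\<^bsub>M\<^esub> y = d \<odot>\<^bsub>M\<^esub> m"
    and inj: "inj_on (\<lambda>y. a \<odot>\<^bsub>M\<^esub> y) (carrier M)"
  shows "\<exists>K. ideal K R \<and> a \<in> K \<and> module_isomorphic R M (ideal_module R K)"
proof -
  define f where "f y = (SOME d. d \<in> carrier R \<and> a \<odot>\<^bsub>M\<^esub> y = d \<odot>\<^bsub>M\<^esub> m)" for y
  have f: "f y \<in> carrier R" "a \<odot>\<^bsub>M\<^esub> y = f y \<odot>\<^bsub>M\<^esub> m" if "y \<in> carrier M" for y
    using someI_ex[OF into[OF that, unfolded Bex_def]] unfolding f_def by blast+
  have f_eq: "f y = d" if "y \<in> carrier M" "d \<in> carrier R" "a \<odot>\<^bsub>M\<^esub> y = d \<odot>\<^bsub>M\<^esub> m" for y d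
    using smult_inj_if_annihilator_zero[OF m] f that by metis
  have f_add: "f (y \<oplus>\<^bsub>M\<^esub> y') = f y \<oplus> f y'" if y: "y \<in> carrier M" "y' \<in> carrier M" for y y'
  proof (rule f_eq)
    have "a \<odot>\<^bsub>M\<^esub> (y \<oplus>\<^bsub>M\<^esub> y') = f y \<odot>\<^bsub>M\<^esub> m \<oplus>\<^bsub>M\<^esub> f y' \<odot>\<^bsub>M\<^esub> m" using a y f by (simp add: smult_r_distr)
    also have "\<dots> = (f y \<oplus> f y') \<odot>\<^bsub>M\<^esub> m" using f y m by (simp add: smult_l_distr)
    finally show "a \<odot>\<^bsub>M\<^esub> (y \<oplus>\<^bsub>M\<^esub> y') = (f y \<oplus> f y') \<odot>\<^bsub>M\<^esub> m" .
  qed (use y f in simp_all)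
  have f_smult: "f (r \<odot>\<^bsub>M\<^esub> y) = r \<otimes> f y" if r: "r \<in> carrier R" and y: "y \<in> carrier M" for r y
  proof (rule f_eq)
    have "a \<odot>\<^bsub>M\<^esub> (r \<odot>\<^bsub>M\<^esub> y) = r \<odot>\<^bsub>M\<^esub> (a \<odot>\<^bsub>M\<^esub> y)"
      using a r y by (simp add: smult_assoc1[symmetric] R.m_comm)
    also have "\<dots> = r \<odot>\<^bsub>M\<^esub> (f y \<odot>\<^bsub>M\<^esub> m)" using f y by simp
    also have "\<dots> = (r \<otimes> f y) \<odot>\<^bsub>M\<^esub> m" using f y r m by (simp add: smult_assoc1)
    finally show "a \<odot>\<^bsub>M\<^esub> (r \<odot>\<^bsub>M\<^esub> y) = (r \<otimes> f y) \<odot>\<^bsub>M\<^esub> m" .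
  qed (use r y f in simp_all)
  have f_inj: "inj_on f (carrier M)"
    using inj f by (metis (no_types, lifting) inj_on_def)
  let ?K = "f ` carrier M"
  have K: "ideal ?K R"
    by (rule ideal_linear_image[OF carrier_is_submodule]) (use f f_add f_smult in auto)
  have "f m = a" using f_eq[of m a] a m by simp
  then have "a \<in> ?K" using m by force
  moreover have "f \<in> module_iso R M (ideal_module R ?K)"
    unfolding module_iso_def using f_inj f_add f_smult by (auto simp: bij_betw_def ideal_module_def)
  ultimately show ?thesis using K unfolding module_isomorphic_def by blast
qed

lemma iso_ring_module_if_annihilator_zero:
  assumes x: "cyclic_generator R M x" and A: "annihilator x = {\<zero>}"
  shows "module_isomorphic R M (ideal_module R (carrier R))"
proof -
  have "\<exists>K. ideal K R \<and> \<one> \<in> K \<and> module_isomorphic R M (ideal_module R K)"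
    using x A by (intro iso_ideal_if_smult_embeds_in_free_cyclic) (auto simp: cyclic_generator_def inj_on_def)
  then show ?thesis using ideal.one_imp_carrier by metis
qed

lemma coefficients_eq_coset:
  assumes x: "x \<in> carrier M" and d: "d \<in> carrier R"
  shows "{d' \<in> carrier R. d' \<odot>\<^bsub>M\<^esub> x = d \<odot>\<^bsub>M\<^esub> x} = annihilator x +> d"
proof -
  interpret A: ideal "annihilator x" R by (rule annihilator_ideal[OF x])
  have "d' \<in> annihilator x +> d \<longleftrightarrow> d' \<in> carrier R \<and> d' \<odot>\<^bsub>M\<^esub> x = d \<odot>\<^bsub>M\<^esub> x" for d'
  proof (cases "d' \<in> carrier R")
    case True
    then show ?thesis
      using A.a_rcos_module_minus[OF ring_axioms d True] smult_eq_iff_diff_in_annihilator[OF x True d]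
      by auto
  next
    case False
    then show ?thesis using R.a_r_coset_subset_G[OF A.a_subset d] by auto
  qed
  then show ?thesis by auto
qed

lemma iso_quotient_annihilator:
  assumes x: "cyclic_generator R M x"
  shows "module_isomorphic R M (quotient_module R (annihilator x))"
proof -
  have xc: "x \<in> carrier M" and gen: "\<And>y. y \<in> carrier M \<Longrightarrow> \<exists>d\<in>carrier R. y = d \<odot>\<^bsub>M\<^esub> x"
    using x unfolding cyclic_generator_def by auto
  let ?A = "annihilator x"
  interpret A: ideal ?A R by (rule annihilator_ideal[OF xc])
  define f where "f y = {d \<in> carrier R. d \<odot>\<^bsub>M\<^esub> x = y}" for y
  have fd: "f (d \<odot>\<^bsub>M\<^esub> x) = ?A +> d" if "d \<in> carrier R" for d
    unfolding f_def using coefficients_eq_coset[OF xc that] .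
  have Q: "carrier (quotient_module R ?A) = {?A +> d | d. d \<in> carrier R}"
    by (auto simp: quotient_module_def FactRing_def A_RCOSETS_def')
  have "f \<in> module_iso R M (quotient_module R ?A)"
    unfolding module_iso_def
  proof (intro CollectI conjI ballI)
    show "bij_betw f (carrier M) (carrier (quotient_module R ?A))"
      unfolding bij_betw_def inj_on_def
    proof (intro conjI ballI impI)
      fix y y' assume y: "y \<in> carrier M" "y' \<in> carrier M" and eq: "f y = f y'"
      obtain d where d: "d \<in> carrier R" "y = d \<odot>\<^bsub>M\<^esub> x" using gen y by auto
      then have "d \<in> f y'" using eq unfolding f_def by auto
      then show "y = y'" unfolding f_def using d by auto
    next
      show "f ` carrier M = carrier (quotient_module R ?A)"
        unfolding Q using gen fd xc by (fastforce intro!: image_eqI[of _ _ "_ \<odot>\<^bsub>M\<^esub> x"])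
    qed
  next
    fix y y' assume y: "y \<in> carrier M" "y' \<in> carrier M"
    obtain d d' where d: "d \<in> carrier R" "y = d \<odot>\<^bsub>M\<^esub> x" "d' \<in> carrier R" "y' = d' \<odot>\<^bsub>M\<^esub> x"
      using gen y by metis
    have "y \<oplus>\<^bsub>M\<^esub> y' = (d \<oplus> d') \<odot>\<^bsub>M\<^esub> x" using d xc by (simp add: smult_l_distr)
    then have "f (y \<oplus>\<^bsub>M\<^esub> y') = ?A +> (d \<oplus> d')" using fd d by simp
    also have "\<dots> = (?A +> d) <+> (?A +> d')" using A.a_rcos_sum d by simp
    finally show "f (y \<oplus>\<^bsub>M\<^esub> y') = f y \<oplus>\<^bsub>quotient_module R ?A\<^esub> f y'"
      using fd d by (simp add: quotient_module_def FactRing_def)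
  next
    fix a y assume a: "a \<in> carrier R" and y: "y \<in> carrier M"
    obtain d where d: "d \<in> carrier R" "y = d \<odot>\<^bsub>M\<^esub> x" using gen y by auto
    have "a \<odot>\<^bsub>M\<^esub> y = (a \<otimes> d) \<odot>\<^bsub>M\<^esub> x" using d a xc by (simp add: smult_assoc1)
    then have "f (a \<odot>\<^bsub>M\<^esub> y) = ?A +> (a \<otimes> d)" using fd d a by simp
    also have "\<dots> = [mod ?A:] (?A +> a) \<Otimes> (?A +> d)" using A.rcoset_mult_add a d by simp
    finally show "f (a \<odot>\<^bsub>M\<^esub> y) = a \<odot>\<^bsub>quotient_module R ?A\<^esub> f y"
      using fd d by (simp add: quotient_module_def FactRing_def)
  qed
  then show ?thesis unfolding module_isomorphic_def by auto
qed

lemma cyclic_module_iso_cases: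
  assumes x: "cyclic_generator R M x"
  shows "module_isomorphic R M (ideal_module R (carrier R)) \<or>
    (\<exists>I. ideal I R \<and> I \<noteq> {\<zero>} \<and> module_isomorphic R M (quotient_module R I))"
proof (cases "annihilator x = {\<zero>}")
  case True
  then show ?thesis using iso_ring_module_if_annihilator_zero[OF x] by simp
next
  case False
  then show ?thesis
    using iso_quotient_annihilator[OF x] annihilator_ideal x unfolding cyclic_generator_def by blast
qed

lemma multiplication_module_if_cyclic:
  assumes x: "cyclic_generator R M x"
  shows "multiplication_module R M"
  unfolding multiplication_module_def
proof (intro allI impI)
  have xc: "x \<in> carrier M" and gen: "\<And>y. y \<in> carrier M \<Longrightarrow> \<exists>d\<in>carrier R. y = d \<odot>\<^bsub>M\<^esub> x"
    using x unfolding cyclic_generator_def by auto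
  fix S assume S: "submodule S R M"
  then have S': "S \<subseteq> carrier M" "\<zero>\<^bsub>M\<^esub> \<in> S" "\<And>x y. x \<in> S \<Longrightarrow> y \<in> S \<Longrightarrow> x \<oplus>\<^bsub>M\<^esub> y \<in> S"
    "\<And>a x. a \<in> carrier R \<Longrightarrow> x \<in> S \<Longrightarrow> a \<odot>\<^bsub>M\<^esub> x \<in> S"
    unfolding submodule_iff_closed by auto
  define J where "J = {d \<in> carrier R. d \<odot>\<^bsub>M\<^esub> x \<in> S}"
  have J: "ideal J R" unfolding ideal_iff_closed J_def
    using S' xc by (auto simp: smult_l_distr smult_assoc1)
  have "S \<subseteq> ideal_smult R J M"
  proof
    fix s assume s: "s \<in> S"
    then obtain d where d: "d \<in> carrier R" "s = d \<odot>\<^bsub>M\<^esub> x" using gen S'(1) by blast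
    then have "d \<in> J" unfolding J_def using s by auto
    then show "s \<in> ideal_smult R J M" using d xc by (simp add: ideal_smult.smult)
  qed
  moreover have "ideal_smult R J M \<subseteq> S"
  proof
    fix w assume "w \<in> ideal_smult R J M"
    then show "w \<in> S"
    proof induct
      case (smult j y)
      obtain d where d: "d \<in> carrier R" "y = d \<odot>\<^bsub>M\<^esub> x" using gen smult by auto
      have j: "j \<in> carrier R" "j \<odot>\<^bsub>M\<^esub> x \<in> S" using smult J_def by auto
      have "j \<odot>\<^bsub>M\<^esub> y = d \<odot>\<^bsub>M\<^esub> (j \<odot>\<^bsub>M\<^esub> x)" using d j xc by (simp add: smult_assoc1[symmetric] R.m_comm)
      then show ?case using S'(4) j d by auto
    qed (use S' in auto)
  qed
  ultimately show "\<exists>I. ideal I R \<and> S = ideal_smult R I M" using J by blast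
qed

definition cyclic_submodule :: "'c \<Rightarrow> 'c set" where
  "cyclic_submodule m = {d \<odot>\<^bsub>M\<^esub> m | d. d \<in> carrier R}"

lemma submodule_cyclic_submodule:
  assumes m: "m \<in> carrier M"
  shows "submodule (cyclic_submodule m) R M"
  unfolding submodule_iff_closed cyclic_submodule_def
proof (intro conjI ballI)
  show "{d \<odot>\<^bsub>M\<^esub> m | d. d \<in> carrier R} \<subseteq> carrier M" using m by auto
  show "\<zero>\<^bsub>M\<^esub> \<in> {d \<odot>\<^bsub>M\<^esub> m | d. d \<in> carrier R}" using m by (auto intro!: exI[of _ \<zero>])
next
  fix x y assume "x \<in> {d \<odot>\<^bsub>M\<^esub> m | d. d \<in> carrier R}" "y \<in> {d \<odot>\<^bsub>M\<^esub> m | d. d \<in> carrier R}"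
  then obtain d d' where "d \<in> carrier R" "d' \<in> carrier R" "x = d \<odot>\<^bsub>M\<^esub> m" "y = d' \<odot>\<^bsub>M\<^esub> m" by auto
  then show "x \<oplus>\<^bsub>M\<^esub> y \<in> {d \<odot>\<^bsub>M\<^esub> m | d. d \<in> carrier R}"
    using m by (auto simp: smult_l_distr[symmetric] intro!: exI[of _ "d \<oplus> d'"])
next
  fix a x assume "a \<in> carrier R" "x \<in> {d \<odot>\<^bsub>M\<^esub> m | d. d \<in> carrier R}"
  then obtain d where "d \<in> carrier R" "x = d \<odot>\<^bsub>M\<^esub> m" by auto
  then show "a \<odot>\<^bsub>M\<^esub> x \<in> {d \<odot>\<^bsub>M\<^esub> m | d. d \<in> carrier R}"
    using m \<open>a \<in> carrier R\<close> by (auto simp: smult_assoc1[symmetric] intro!: exI[of _ "a \<otimes> d"])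
qed

lemma cyclic_submodule_eq_ideal_smult:
  assumes "multiplication_module R M" "m \<in> carrier M"
  obtains I where "ideal I R" "cyclic_submodule m = ideal_smult R I M"
  using assms submodule_cyclic_submodule unfolding multiplication_module_def by blast

lemma mem_cyclic_submodule: "m \<in> carrier M \<Longrightarrow> m \<in> cyclic_submodule m"
  unfolding cyclic_submodule_def by (auto intro!: exI[of _ \<one>])

lemma ideal_smult_zero_ideal: "I \<subseteq> {\<zero>} \<Longrightarrow> ideal_smult D I M = {\<zero>\<^bsub>M\<^esub>}"
proof (intro equalityI subsetI)
  fix w assume "I \<subseteq> {\<zero>}" and "w \<in> ideal_smult D I M"
  from this(2) show "w \<in> {\<zero>\<^bsub>M\<^esub>}" by induct (use \<open>I \<subseteq> {\<zero>}\<close> in auto)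
qed (simp add: ideal_smult.zero)

end

section \<open>Modules isomorphic to ideals\<close>

context
  fixes D :: "('a, 'b) ring_scheme" and N :: "('a, 'c, 'd) module_scheme" and K f
  assumes N: "module D N" and K: "ideal K D" and f: "f \<in> module_iso D N (ideal_module D K)"
begin

private lemma iso_ideal_props:
  "bij_betw f (carrier N) K"
  "\<And>x y. x \<in> carrier N \<Longrightarrow> y \<in> carrier N \<Longrightarrow> f (x \<oplus>\<^bsub>N\<^esub> y) = f x \<oplus>\<^bsub>D\<^esub> f y"
  "\<And>a x. a \<in> carrier D \<Longrightarrow> x \<in> carrier N \<Longrightarrow> f (a \<odot>\<^bsub>N\<^esub> x) = a \<otimes>\<^bsub>D\<^esub> f x"
  using f unfolding module_iso_def by (auto simp: ideal_module_def)

private lemma iso_ideal_zero: "f \<zero>\<^bsub>N\<^esub> = \<zero>\<^bsub>D\<^esub>"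
proof -
  interpret module D N by (rule N)
  have "f \<zero>\<^bsub>N\<^esub> \<in> carrier D"
    using iso_ideal_props(1) ideal_subset[OF K] unfolding bij_betw_def by auto
  then show ?thesis using iso_ideal_props(3)[of "\<zero>\<^bsub>D\<^esub>" "\<zero>\<^bsub>N\<^esub>"] by simp
qed

lemma iso_ideal_image_ideal_smult:
  assumes I: "ideal I D"
  shows "f ` ideal_smult D I N = I \<cdot>\<^bsub>D\<^esub> K"
proof -
  interpret module D N by (rule N)
  note bij = iso_ideal_props(1) and add = iso_ideal_props(2) and lin = iso_ideal_props(3)
  have Ic: "I \<subseteq> carrier D" by (rule ideal_subset[OF I])
  have IN: "ideal_smult D I N \<subseteq> carrier N" by (rule ideal_smult_subset[OF Ic])
  have fK: "f x \<in> K" if "x \<in> carrier N" for x using bij that unfolding bij_betw_def by auto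
  moreover have "f w \<in> I \<cdot>\<^bsub>D\<^esub> K" if "w \<in> ideal_smult D I N" for w
    using that
  proof induct
    case zero
    then show ?case
      using iso_ideal_zero ideal_prod.prod[of "\<zero>\<^bsub>D\<^esub>" I "\<zero>\<^bsub>D\<^esub>" K D, OF ideal_zero_closed[OF I] ideal_zero_closed[OF K]]
      by simp
  next
    case (smult a m)
    then have "f (a \<odot>\<^bsub>N\<^esub> m) = a \<otimes>\<^bsub>D\<^esub> f m" using lin Ic by auto
    then show ?case using fK[of m] smult ideal_prod.prod[of a I "f m" K D] by simp
  next
    case (add x y)
    then have "f (x \<oplus>\<^bsub>N\<^esub> y) = f x \<oplus>\<^bsub>D\<^esub> f y" using iso_ideal_props(2) IN by auto
    then show ?case using add ideal_prod.sum[of "f x" D I K "f y"] by simp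
  qed
  moreover have "z \<in> f ` ideal_smult D I N" if "z \<in> I \<cdot>\<^bsub>D\<^esub> K" for z
    using that
  proof induct
    case (prod i j)
    then obtain y where y: "y \<in> carrier N" "j = f y" using bij unfolding bij_betw_def by auto
    then have "i \<otimes>\<^bsub>D\<^esub> j = f (i \<odot>\<^bsub>N\<^esub> y)" using lin prod Ic by auto
    then show ?case using prod y by (auto intro: ideal_smult.smult)
  next
    case (sum s1 s2)
    then obtain w1 w2 where w: "w1 \<in> ideal_smult D I N" "w2 \<in> ideal_smult D I N" "s1 = f w1" "s2 = f w2"
      by auto
    have "w1 \<in> carrier N" "w2 \<in> carrier N" using w IN by auto
    then have "s1 \<oplus>\<^bsub>D\<^esub> s2 = f (w1 \<oplus>\<^bsub>N\<^esub> w2)" using add w by simp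
    then show ?case using w by (auto intro: ideal_smult.add)
  qed
  ultimately show ?thesis by blast
qed

lemma ideal_iso_image_submodule:
  assumes S: "submodule S D N"
  shows "ideal (f ` S) D" "f ` S \<subseteq> K"
proof -
  interpret module D N by (rule N)
  have fK: "f ` carrier N \<subseteq> K" using iso_ideal_props(1) unfolding bij_betw_def by simp
  then show "f ` S \<subseteq> K" using submoduleE(1)[OF S] by blast
  show "ideal (f ` S) D"
    by (rule ideal_linear_image[OF S]) (use fK ideal_subset[OF K] iso_ideal_props(2,3) in auto)
qed

lemma multiplication_module_if_iso_ideal:
  assumes mr: "multiplication_ring D"
  shows "multiplication_module D N"
  unfolding multiplication_module_def
proof (intro allI impI)
  interpret module D N by (rule N)
  fix S assume S: "submodule S D N"
  obtain I where I: "ideal I D" "f ` S = I \<cdot>\<^bsub>D\<^esub> K"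
    using mr K ideal_iso_image_submodule[OF S] unfolding multiplication_ring_def by blast
  then have "f ` S = f ` ideal_smult D I N" by (simp add: iso_ideal_image_ideal_smult)
  moreover have "inj_on f (carrier N)" using iso_ideal_props(1) by (simp add: bij_betw_def)
  moreover have "S \<subseteq> carrier N" using S unfolding submodule_iff_closed by simp
  moreover have "ideal_smult D I N \<subseteq> carrier N" by (rule ideal_smult_subset[OF ideal_subset[OF I(1)]])
  ultimately have "S = ideal_smult D I N" by (simp add: inj_on_image_eq_iff)
  then show "\<exists>I. ideal I D \<and> S = ideal_smult D I N" using I(1) by blast
qed

end

section \<open>Products of ideals and maximal ideals\<close>

context cring
begin

lemma ideal_foldr_prod:
  "\<forall>P\<in>set Ps. ideal P R \<Longrightarrow> ideal (foldr (ideal_prod R) Ps (carrier R)) R"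
  by (induct Ps) (auto intro: ideal_prod_is_ideal oneideal)

lemma foldr_ideal_prod_subset:
  "\<forall>P\<in>set Ps. ideal P R \<Longrightarrow> Q \<in> set Ps \<Longrightarrow> foldr (ideal_prod R) Ps (carrier R) \<subseteq> Q"
proof (induct Ps)
  case (Cons P Ps)
  have "foldr (ideal_prod R) (P # Ps) (carrier R) \<subseteq> P \<inter> foldr (ideal_prod R) Ps (carrier R)"
    using ideal_prod_inter Cons(2) ideal_foldr_prod by simp
  then show ?case using Cons by auto
qed simp

lemma primeideal_contains_factor:
  assumes "\<forall>P\<in>set Ps. ideal P R" "primeideal Q R" "foldr (ideal_prod R) Ps (carrier R) \<subseteq> Q"
  shows "\<exists>P\<in>set Ps. P \<subseteq> Q"
  using assms
proof (induct Ps)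
  case Nil
  then show ?case using primeideal.I_notcarr[OF Nil(2)] ideal_subset[OF primeideal.axioms(1)[OF Nil(2)]]
    by auto
next
  case (Cons P Ps)
  then have "P \<subseteq> Q \<or> foldr (ideal_prod R) Ps (carrier R) \<subseteq> Q"
    using primeideal_divides_ideal_prod ideal_foldr_prod by simp
  then show ?case using Cons by auto
qed

lemma ideal_prod_mono_left: "I \<subseteq> I' \<Longrightarrow> I \<cdot> J \<subseteq> I' \<cdot> J"
proof
  fix x assume "I \<subseteq> I'" and "x \<in> I \<cdot> J"
  from this(2) show "x \<in> I' \<cdot> J" by induct (use \<open>I \<subseteq> I'\<close> in \<open>auto intro: ideal_prod.intros\<close>)
qed

lemma ideal_subset_ideal_add:
  assumes "ideal I R" "ideal J R"
  shows "I \<subseteq> I <+> J" "J \<subseteq> I <+> J"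
proof -
  have "i \<oplus> \<zero> \<in> I <+> J" if "i \<in> I" for i
    using that ideal_zero_closed[OF assms(2)] unfolding set_add_def' by auto
  then show "I \<subseteq> I <+> J" using ideal_subset[OF assms(1)] by force
  have "\<zero> \<oplus> j \<in> I <+> J" if "j \<in> J" for j
    using that ideal_zero_closed[OF assms(1)] unfolding set_add_def' by auto
  then show "J \<subseteq> I <+> J" using ideal_subset[OF assms(2)] by force
qed

lemma cgenideal_prod_mem:
  assumes a: "a \<in> carrier R" and Y: "ideal Y R" and z: "z \<in> (PIdl a) \<cdot> Y"
  shows "\<exists>y\<in>Y. z = a \<otimes> y"
  using z
proof induct
  case (prod i j)
  then obtain x where x: "x \<in> carrier R" "i = x \<otimes> a" unfolding cgenideal_def by auto
  have "j \<in> carrier R" using prod ideal_subset[OF Y] by auto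
  then have "i \<otimes> j = a \<otimes> (x \<otimes> j)" using x a by (simp add: m_comm m_lcomm)
  moreover have "x \<otimes> j \<in> Y" using ideal.I_l_closed[OF Y prod(2) x(1)] .
  ultimately show ?case by auto
next
  case (sum s1 s2)
  then obtain y1 y2 where y: "y1 \<in> Y" "y2 \<in> Y" "s1 = a \<otimes> y1" "s2 = a \<otimes> y2" by auto
  moreover have "y1 \<in> carrier R" "y2 \<in> carrier R" using y ideal_subset[OF Y] by auto
  ultimately have "s1 \<oplus> s2 = a \<otimes> (y1 \<oplus> y2)" using a by (simp add: r_distr)
  then show ?case using ideal_add_closed[OF Y y(1,2)] by auto
qed

text \<open>Krull's theorem, by Zorn's lemma on the ideals containing \<open>J\<close> but not \<open>\<one>\<close>.\<close>

lemma ideal_in_maximalideal: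
  assumes J: "ideal J R" "J \<noteq> carrier R"
  obtains m where "maximalideal m R" "J \<subseteq> m"
proof -
  define A where "A = {I. ideal I R \<and> J \<subseteq> I \<and> \<one> \<notin> I}"
  have "\<exists>m\<in>A. \<forall>I\<in>A. m \<subseteq> I \<longrightarrow> I = m"
  proof (rule subset_Zorn_nonempty)
    show "A \<noteq> {}" using J ideal.one_imp_carrier unfolding A_def by blast
  next
    fix C assume C: "C \<noteq> {}" "subset.chain A C"
    then have CA: "\<And>I. I \<in> C \<Longrightarrow> ideal I R \<and> J \<subseteq> I \<and> \<one> \<notin> I"
      and chain: "\<And>I I'. I \<in> C \<Longrightarrow> I' \<in> C \<Longrightarrow> I \<subseteq> I' \<or> I' \<subseteq> I"
      unfolding subset_chain_def A_def by blast+
    obtain I0 where I0: "I0 \<in> C" using C(1) by blast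
    have "ideal (\<Union>C) R" unfolding ideal_iff_closed
    proof (intro conjI ballI)
      show "\<Union>C \<subseteq> carrier R" using CA ideal_subset by (meson Union_least)
      show "\<zero> \<in> \<Union>C" using I0 CA ideal_zero_closed by (meson UnionI)
    next
      fix x y assume "x \<in> \<Union>C" "y \<in> \<Union>C"
      then obtain I I' where "I \<in> C" "I' \<in> C" "x \<in> I" "y \<in> I'" by blast
      then obtain K where K: "K \<in> C" "x \<in> K" "y \<in> K" using chain[of I I'] by blast
      then have "x \<oplus> y \<in> K" using CA ideal_add_closed by meson
      then show "x \<oplus> y \<in> \<Union>C" using K(1) by blast
    next
      fix a x assume a: "a \<in> carrier R" and "x \<in> \<Union>C"
      then obtain K where K: "K \<in> C" "x \<in> K" by blast
      then have "a \<otimes> x \<in> K" using a CA ideal.I_l_closed by meson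
      then show "a \<otimes> x \<in> \<Union>C" using K(1) by blast
    qed
    moreover have "J \<subseteq> \<Union>C" using I0 CA[OF I0] by auto
    moreover have "\<one> \<notin> \<Union>C" using CA by auto
    ultimately show "\<Union>C \<in> A" by (simp add: A_def)
  qed
  then obtain m where "m \<in> A" and max: "\<And>I. I \<in> A \<Longrightarrow> m \<subseteq> I \<Longrightarrow> I = m" by blast
  then have m: "ideal m R" "J \<subseteq> m" "\<one> \<notin> m" by (simp_all add: A_def)
  have "maximalideal m R"
  proof (rule maximalidealI[OF m(1)])
    show "carrier R \<noteq> m" using m(3) by blast
    fix I assume I: "ideal I R" "m \<subseteq> I" "I \<subseteq> carrier R"
    then have "I \<noteq> carrier R \<Longrightarrow> I \<in> A"
      using m(2) ideal.one_imp_carrier[OF I(1)] by (auto simp: A_def)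
    then show "I = m \<or> I = carrier R" using max I(2) by blast
  qed
  then show ?thesis using m(2) that by blast
qed

lemma foldr_maximalideals_not_subset:
  assumes L: "\<forall>P\<in>set L. maximalideal P R" and Q: "maximalideal Q R" "Q \<notin> set L"
  shows "\<not> foldr (ideal_prod R) L (carrier R) \<subseteq> Q"
proof
  have LI: "\<forall>P\<in>set L. ideal P R" using L maximalideal.axioms(1) by blast
  have QI: "ideal Q R" using Q(1) maximalideal.axioms(1) by blast
  assume "foldr (ideal_prod R) L (carrier R) \<subseteq> Q"
  then obtain P where P: "P \<in> set L" "P \<subseteq> Q"
    using primeideal_contains_factor[OF LI maximalideal_prime[OF Q(1)]] by blast
  then have "Q = P \<or> Q = carrier R" using maximalideal.I_maximal[of P R Q] L QI ideal_subset[OF QI] by blast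
  then show False using maximalideal.I_notcarr[OF Q(1)] P(1) Q(2) by blast
qed

lemma ideal_add_foldr_maximalideals_eq_carrier:
  assumes Ps: "\<forall>P\<in>set Ps. maximalideal P R" and I: "ideal I R" "\<forall>P\<in>set Ps. \<not> I \<subseteq> P"
  shows "I <+>\<^bsub>R\<^esub> foldr (ideal_prod R) Ps (carrier R) = carrier R"
proof (rule ccontr)
  let ?A = "foldr (ideal_prod R) Ps (carrier R)"
  have PI: "\<forall>P\<in>set Ps. ideal P R" using Ps maximalideal.axioms(1) by blast
  have AI: "ideal ?A R" by (rule ideal_foldr_prod[OF PI])
  note IA = ideal_subset_ideal_add[OF I(1) AI]
  assume "I <+>\<^bsub>R\<^esub> ?A \<noteq> carrier R"
  then obtain Q where Q: "maximalideal Q R" "I <+>\<^bsub>R\<^esub> ?A \<subseteq> Q"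
    using ideal_in_maximalideal[OF add_ideals[OF I(1) AI]] by blast
  have QI: "ideal Q R" using Q(1) maximalideal.axioms(1) by blast
  obtain P where P: "P \<in> set Ps" "P \<subseteq> Q"
    using primeideal_contains_factor[OF PI maximalideal_prime[OF Q(1)]] IA(2) Q(2) by blast
  then have "Q = P \<or> Q = carrier R" using maximalideal.I_maximal[of P R Q] Ps QI ideal_subset[OF QI] by blast
  then have "I \<subseteq> P" using IA(1) Q maximalideal.I_notcarr by blast
  then show False using I(2) P(1) by blast
qed

end

context domain
begin

lemma multiplication_ring_cancel:
  assumes mr: "multiplication_ring R" and I: "ideal I R" "I \<noteq> {\<zero>}" and J: "ideal J R"
    and eq: "I \<cdot> J = I"
  shows "J = carrier R"
proof -
  obtain a where a: "a \<in> I" "a \<noteq> \<zero>" using I ideal_zero_closed[OF I(1)] by auto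
  have ac: "a \<in> carrier R" using a ideal_subset[OF I(1)] by auto
  obtain I' where I': "ideal I' R" "PIdl a = I' \<cdot> I"
    using mr cgenideal_ideal[OF ac] cgenideal_minimal[OF I(1) a(1)] I(1)
    unfolding multiplication_ring_def by blast
  have "PIdl a = I' \<cdot> (I \<cdot> J)" using I' eq by simp
  also have "\<dots> = (PIdl a) \<cdot> J" using ideal_prod_assoc[OF I'(1) I(1) J] I' by simp
  finally obtain y where y: "y \<in> J" "a = a \<otimes> y"
    using cgenideal_prod_mem[OF ac J] cgenideal_self[OF ac] by force
  have "y \<in> carrier R" using y ideal_subset[OF J] by auto
  then have "y = \<one>" using m_lcancel[OF a(2) ac one_closed] y ac by simp
  then show ?thesis using y ideal.one_imp_carrier[OF J] by simp
qed

lemma multiplication_ring_primeideal_maximal: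
  assumes mr: "multiplication_ring R" and P: "primeideal P R" "P \<noteq> {\<zero>}"
  shows "maximalideal P R"
proof -
  have PI: "ideal P R" using P primeideal.axioms(1) by auto
  show ?thesis
  proof (rule maximalidealI[OF PI])
    show "carrier R \<noteq> P" using primeideal.I_notcarr[OF P(1)] .
  next
    fix J assume J: "ideal J R" "P \<subseteq> J" "J \<subseteq> carrier R"
    show "J = P \<or> J = carrier R"
    proof (cases "J = P")
      case False
      obtain I where I: "ideal I R" "P = I \<cdot> J" using mr J PI unfolding multiplication_ring_def by blast
      then have "I \<subseteq> P" using primeideal_divides_ideal_prod[OF P(1) I(1) J(1)] False J by auto
      then have "P \<cdot> J = P" using I ideal_prod_mono_left ideal_prod_inter[OF PI J(1)] by blast
      then show ?thesis using multiplication_ring_cancel[OF mr PI P(2) J(1)] by simp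
    qed simp
  qed
qed

end

section \<open>Multiplication modules over Dedekind domains\<close>

context module
begin

definition module_annihilator :: "'a set" where
  "module_annihilator = {r \<in> carrier R. \<forall>y\<in>carrier M. r \<odot>\<^bsub>M\<^esub> y = \<zero>\<^bsub>M\<^esub>}"

lemma module_annihilator_ideal: "ideal module_annihilator R"
  unfolding ideal_iff_closed module_annihilator_def by (auto simp: smult_l_distr smult_assoc1)

lemma module_annihilator_nonzero_if_torsion:
  assumes D: "domain R" and mm: "multiplication_module R M"
    and t: "t \<in> carrier M" "t \<noteq> \<zero>\<^bsub>M\<^esub>" and a: "a \<in> carrier R" "a \<noteq> \<zero>" "a \<odot>\<^bsub>M\<^esub> t = \<zero>\<^bsub>M\<^esub>"
  shows "module_annihilator \<noteq> {\<zero>}"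
proof -
  obtain J where J: "ideal J R" "cyclic_submodule t = ideal_smult R J M"
    using cyclic_submodule_eq_ideal_smult[OF mm t(1)] .
  then have "\<not> J \<subseteq> {\<zero>}" using ideal_smult_zero_ideal mem_cyclic_submodule[OF t(1)] t(2) by auto
  then obtain j where j: "j \<in> J" "j \<noteq> \<zero>" by auto
  have jc: "j \<in> carrier R" using j ideal_subset[OF J(1)] by auto
  have "(a \<otimes> j) \<odot>\<^bsub>M\<^esub> y = \<zero>\<^bsub>M\<^esub>" if y: "y \<in> carrier M" for y
  proof -
    have "j \<odot>\<^bsub>M\<^esub> y \<in> cyclic_submodule t" using J(2) j(1) y by (simp add: ideal_smult.smult)
    then obtain d where d: "d \<in> carrier R" "j \<odot>\<^bsub>M\<^esub> y = d \<odot>\<^bsub>M\<^esub> t" unfolding cyclic_submodule_def by auto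
    have "(a \<otimes> j) \<odot>\<^bsub>M\<^esub> y = (d \<otimes> a) \<odot>\<^bsub>M\<^esub> t" using a jc y d t by (simp add: smult_assoc1 R.m_comm)
    also have "\<dots> = \<zero>\<^bsub>M\<^esub>" using a d t by (simp add: smult_assoc1)
    finally show ?thesis .
  qed
  moreover have "a \<otimes> j \<noteq> \<zero>" using a jc j domain.integral[OF D] by auto
  ultimately show ?thesis using a jc unfolding module_annihilator_def by auto
qed

text \<open>If \<open>M = P M\<close> with \<open>Ann M = A' P\<close>, then \<open>A'\<close> kills \<open>P M = M\<close>, so \<open>A' P = A'\<close> and \<open>P = R\<close>
  by cancellation.\<close>

lemma ideal_smult_ne_carrier_if_contains_annihilator:
  assumes D: "domain R" and mr: "multiplication_ring R"
    and P: "ideal P R" "P \<noteq> carrier R" "module_annihilator \<subseteq> P"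
    and A: "module_annihilator \<noteq> {\<zero>}"
  shows "\<exists>z\<in>carrier M. z \<notin> ideal_smult R P M"
proof (rule ccontr)
  interpret D: domain R by (rule D)
  let ?A = "module_annihilator"
  assume "\<not> ?thesis"
  then have all: "carrier M \<subseteq> ideal_smult R P M" by auto
  obtain A' where A': "ideal A' R" "?A = A' \<cdot> P"
    using mr module_annihilator_ideal P unfolding multiplication_ring_def by blast
  have "A' \<subseteq> ?A"
  proof
    fix r assume r: "r \<in> A'"
    have rc: "r \<in> carrier R" using r ideal_subset[OF A'(1)] by auto
    have "r \<odot>\<^bsub>M\<^esub> w = \<zero>\<^bsub>M\<^esub>" if "w \<in> ideal_smult R P M" for w
      using that
    proof induct
      case (smult p m)
      have "r \<otimes> p \<in> ?A" using A'(2) ideal_prod.prod[OF r smult(1), of R] by simp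
      then show ?case using rc smult ideal_subset[OF P(1)] unfolding module_annihilator_def
        by (auto simp: smult_assoc1)
    next
      case (add x y)
      then have "x \<in> carrier M" "y \<in> carrier M" using ideal_smult_subset[OF ideal_subset[OF P(1)]] by auto
      then show ?case using add rc by (simp add: smult_r_distr)
    qed (use rc in simp)
    then show "r \<in> ?A" unfolding module_annihilator_def using rc all by auto
  qed
  then have "A' \<cdot> P = A'" using A' ideal_prod_inter[OF A'(1) P(1)] by auto
  moreover have "A' \<noteq> {\<zero>}"
  proof
    assume "A' = {\<zero>}"
    then have "?A \<subseteq> {\<zero>}" using A'(2) ideal_prod_inter[OF A'(1) P(1)] by auto
    then show False using A ideal_zero_closed[OF module_annihilator_ideal] by auto
  qed
  ultimately show False using D.multiplication_ring_cancel[OF mr A'(1) _ P(1)] P(2) by simp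
qed

lemma mem_ideal_smult_if_comaximal:
  assumes Q: "maximalideal Q R" and u: "u \<in> carrier R" "u \<notin> Q" and z: "z \<in> carrier M"
    and uz: "u \<odot>\<^bsub>M\<^esub> z \<in> ideal_smult R Q M"
  shows "z \<in> ideal_smult R Q M"
proof -
  have QI: "ideal Q R" using Q maximalideal.axioms(1) by blast
  note sum = R.ideal_subset_ideal_add[OF QI R.cgenideal_ideal[OF u(1)]]
  have SI: "ideal (Q <+>\<^bsub>R\<^esub> PIdl u) R" by (rule R.add_ideals[OF QI R.cgenideal_ideal[OF u(1)]])
  have "(Q <+>\<^bsub>R\<^esub> PIdl u) = Q \<or> (Q <+>\<^bsub>R\<^esub> PIdl u) = carrier R"
    by (rule maximalideal.I_maximal[OF Q SI sum(1) ideal_subset[OF SI]])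
  moreover have "u \<in> Q <+>\<^bsub>R\<^esub> PIdl u" using sum(2) R.cgenideal_self[OF u(1)] by blast
  ultimately have "\<one> \<in> Q <+>\<^bsub>R\<^esub> PIdl u" using u(2) by auto
  then obtain q v where "q \<in> Q" "v \<in> PIdl u" "\<one> = q \<oplus> v" unfolding set_add_def' by blast
  then obtain s where qs: "q \<in> Q" "s \<in> carrier R" "\<one> = q \<oplus> s \<otimes> u"
    unfolding cgenideal_def by blast
  have qc: "q \<in> carrier R" using qs ideal_subset[OF QI] by auto
  have "z = q \<odot>\<^bsub>M\<^esub> z \<oplus>\<^bsub>M\<^esub> s \<odot>\<^bsub>M\<^esub> (u \<odot>\<^bsub>M\<^esub> z)"
    using smult_one[OF z] qs qc u z by (metis smult_l_distr smult_assoc1 R.m_closed)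
  moreover have "q \<odot>\<^bsub>M\<^esub> z \<in> ideal_smult R Q M" using qs z by (simp add: ideal_smult.smult)
  moreover have "s \<odot>\<^bsub>M\<^esub> (u \<odot>\<^bsub>M\<^esub> z) \<in> ideal_smult R Q M"
    using submodule_ideal_smult[OF QI] uz qs unfolding submodule_iff_closed by blast
  ultimately show ?thesis by (metis ideal_smult.add)
qed

lemma submodule_add_mem_iff:
  assumes S: "submodule S R M" and x: "x \<in> carrier M" and w: "w \<in> S"
  shows "x \<oplus>\<^bsub>M\<^esub> w \<in> S \<longleftrightarrow> x \<in> S"
proof
  note closed = submoduleE[OF S]
  have wc: "w \<in> carrier M" using closed(1) w by blast
  assume "x \<oplus>\<^bsub>M\<^esub> w \<in> S"
  then have "(x \<oplus>\<^bsub>M\<^esub> w) \<oplus>\<^bsub>M\<^esub> \<ominus>\<^bsub>M\<^esub> w \<in> S" using closed(3,5) w by blast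
  then show "x \<in> S" using x wc by (simp add: M.a_assoc M.r_neg)
next
  assume "x \<in> S"
  then show "x \<oplus>\<^bsub>M\<^esub> w \<in> S" using submoduleE(5)[OF S] w by blast
qed

lemma cyclic_generator_zero_module:
  "(\<And>y. y \<in> carrier M \<Longrightarrow> y = \<zero>\<^bsub>M\<^esub>) \<Longrightarrow> cyclic_generator R M \<zero>\<^bsub>M\<^esub>"
  unfolding cyclic_generator_def by (metis M.zero_closed R.zero_closed smult_l_null)

lemma exists_avoiding_ideal_smults:
  assumes "\<forall>P\<in>set Ps. maximalideal P R \<and> (\<exists>z\<in>carrier M. z \<notin> ideal_smult R P M)"
  shows "\<exists>x\<in>carrier M. \<forall>P\<in>set Ps. x \<notin> ideal_smult R P M"
  using assms
proof (induct Ps)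
  case (Cons Q L)
  then obtain x where x: "x \<in> carrier M" "\<forall>P\<in>set L. x \<notin> ideal_smult R P M" by auto
  have Q: "maximalideal Q R" using Cons.prems by simp
  then have QI: "ideal Q R" using maximalideal.axioms(1) by blast
  have LI: "\<forall>P\<in>set L. ideal P R" using Cons.prems maximalideal.axioms(1) by auto
  show ?case
  proof (cases "x \<in> ideal_smult R Q M")
    case False
    then show ?thesis using x by auto
  next
    case xQ: True
    then have "Q \<notin> set L" using x(2) by blast
    then obtain u where u: "u \<in> foldr (ideal_prod R) L (carrier R)" "u \<notin> Q"
      using R.foldr_maximalideals_not_subset[OF _ Q] Cons.prems by auto
    have uc: "u \<in> carrier R" using u ideal_subset[OF R.ideal_foldr_prod[OF LI]] by blast
    obtain z where z: "z \<in> carrier M" "z \<notin> ideal_smult R Q M" using Cons.prems by auto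
    have uz: "u \<odot>\<^bsub>M\<^esub> z \<in> carrier M" using uc z by simp
    have "x \<oplus>\<^bsub>M\<^esub> u \<odot>\<^bsub>M\<^esub> z \<notin> ideal_smult R P M" if P: "P \<in> set L" for P
    proof -
      have "u \<in> P" using R.foldr_ideal_prod_subset[OF LI P] u(1) by blast
      then have "u \<odot>\<^bsub>M\<^esub> z \<in> ideal_smult R P M" using z by (simp add: ideal_smult.smult)
      then show ?thesis
        using submodule_add_mem_iff[OF submodule_ideal_smult x(1)] LI P x(2) by blast
    qed
    moreover have "x \<oplus>\<^bsub>M\<^esub> u \<odot>\<^bsub>M\<^esub> z \<notin> ideal_smult R Q M"
    proof
      assume "x \<oplus>\<^bsub>M\<^esub> u \<odot>\<^bsub>M\<^esub> z \<in> ideal_smult R Q M"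
      then have "u \<odot>\<^bsub>M\<^esub> z \<oplus>\<^bsub>M\<^esub> x \<in> ideal_smult R Q M" using x uz by (simp add: M.a_comm)
      then have "u \<odot>\<^bsub>M\<^esub> z \<in> ideal_smult R Q M"
        using submodule_add_mem_iff[OF submodule_ideal_smult[OF QI] uz xQ] by blast
      then show False using mem_ideal_smult_if_comaximal[OF Q uc u(2) z(1)] z(2) by blast
    qed
    ultimately show ?thesis using x(1) uz by auto
  qed
qed auto

lemma cyclic_generator_if_comaximal_annihilator:
  assumes x: "x \<in> carrier M" and I: "ideal I R" "cyclic_submodule x = ideal_smult R I M"
    and comax: "I <+>\<^bsub>R\<^esub> module_annihilator = carrier R"
  shows "cyclic_generator R M x"
proof -
  obtain i r where ir: "i \<in> I" "r \<in> module_annihilator" "\<one> = i \<oplus> r"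
    using comax R.one_closed unfolding set_add_def' by blast
  have ic: "i \<in> carrier R" "r \<in> carrier R"
    using ir ideal_subset[OF I(1)] ideal_subset[OF module_annihilator_ideal] by auto
  have "y \<in> cyclic_submodule x" if y: "y \<in> carrier M" for y
  proof -
    have "y = i \<odot>\<^bsub>M\<^esub> y \<oplus>\<^bsub>M\<^esub> r \<odot>\<^bsub>M\<^esub> y" using ir(3) ic y by (metis smult_one smult_l_distr)
    also have "\<dots> = i \<odot>\<^bsub>M\<^esub> y" using ir(2) y ic unfolding module_annihilator_def by simp
    finally have "y = i \<odot>\<^bsub>M\<^esub> y" .
    moreover have "i \<odot>\<^bsub>M\<^esub> y \<in> ideal_smult R I M" by (rule ideal_smult.smult[OF ir(1) y])
    ultimately show ?thesis using I(2) by simp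
  qed
  then show ?thesis using x unfolding cyclic_generator_def cyclic_submodule_def by blast
qed

text \<open>For \<open>x\<close> outside every \<open>P\<^sub>i M\<close>, where \<open>Ann M = P\<^sub>1 \<cdots> P\<^sub>k\<close>, write \<open>R x = I M\<close>; then
  \<open>I + Ann M = R\<close>, so \<open>M = I M = R x\<close>.\<close>

lemma cyclic_if_dedekind_torsion:
  assumes dd: "dedekind_domain R" and mr: "multiplication_ring R" and mm: "multiplication_module R M"
    and t: "t \<in> carrier M" "t \<noteq> \<zero>\<^bsub>M\<^esub>" and a: "a \<in> carrier R" "a \<noteq> \<zero>" "a \<odot>\<^bsub>M\<^esub> t = \<zero>\<^bsub>M\<^esub>"
  shows "\<exists>x. cyclic_generator R M x"
proof -
  have dom: "domain R" using dd unfolding dedekind_domain_def by auto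
  interpret D: domain R by (rule dom)
  let ?A = "module_annihilator"
  have AI: "ideal ?A R" by (rule module_annihilator_ideal)
  have A0: "?A \<noteq> {\<zero>}" by (rule module_annihilator_nonzero_if_torsion[OF dom mm t a])
  show ?thesis
  proof (cases "?A = carrier R")
    case True
    then have "\<one> \<in> ?A" by simp
    then have "y = \<zero>\<^bsub>M\<^esub>" if "y \<in> carrier M" for y
      using that by (simp add: module_annihilator_def)
    then show ?thesis using cyclic_generator_zero_module by blast
  next
    case False
    obtain Ps where Ps: "\<forall>P\<in>set Ps. primeideal P R" "?A = foldr (ideal_prod R) Ps (carrier R)"
      using dd AI A0 False unfolding dedekind_domain_def by blast
    have PI: "\<forall>P\<in>set Ps. ideal P R" using Ps(1) primeideal.axioms(1) by blast
    have AP: "?A \<subseteq> P" if "P \<in> set Ps" for P using R.foldr_ideal_prod_subset[OF PI that] Ps(2) by simp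
    have maxP: "maximalideal P R" if P: "P \<in> set Ps" for P
    proof -
      have "P \<noteq> {\<zero>}" using AP[OF P] A0 ideal_zero_closed[OF AI] by blast
      then show ?thesis using D.multiplication_ring_primeideal_maximal[OF mr] Ps(1) P by blast
    qed
    have "\<exists>z\<in>carrier M. z \<notin> ideal_smult R P M" if P: "P \<in> set Ps" for P
      using ideal_smult_ne_carrier_if_contains_annihilator[OF dom mr _ _ AP[OF P] A0]
        PI P primeideal.I_notcarr Ps(1) by blast
    then obtain x where x: "x \<in> carrier M" "\<forall>P\<in>set Ps. x \<notin> ideal_smult R P M"
      using exists_avoiding_ideal_smults[of Ps] maxP by blast
    obtain I where I: "ideal I R" "cyclic_submodule x = ideal_smult R I M"
      using cyclic_submodule_eq_ideal_smult[OF mm x(1)] .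
    have xI: "x \<in> ideal_smult R I M" using I(2) mem_cyclic_submodule[OF x(1)] by simp
    have "\<not> I \<subseteq> P" if "P \<in> set Ps" for P
    proof
      assume "I \<subseteq> P"
      then have "ideal_smult R I M \<subseteq> ideal_smult R P M" by (rule ideal_smult_mono)
      then show False using xI x(2) that by blast
    qed
    then have "I <+>\<^bsub>R\<^esub> ?A = carrier R"
      using R.ideal_add_foldr_maximalideals_eq_carrier[OF _ I(1)] maxP Ps(2) by simp
    then show ?thesis using cyclic_generator_if_comaximal_annihilator[OF x(1) I] by blast
  qed
qed

lemma iso_ideal_if_torsion_free:
  assumes mm: "multiplication_module R M"
    and tf: "\<forall>t\<in>carrier M. \<forall>a\<in>carrier R. a \<odot>\<^bsub>M\<^esub> t = \<zero>\<^bsub>M\<^esub> \<longrightarrow> a = \<zero> \<or> t = \<zero>\<^bsub>M\<^esub>"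
    and m: "m \<in> carrier M" "m \<noteq> \<zero>\<^bsub>M\<^esub>"
  shows "\<exists>K. ideal K R \<and> K \<noteq> {\<zero>} \<and> module_isomorphic R M (ideal_module R K)"
proof -
  obtain I where I: "ideal I R" "cyclic_submodule m = ideal_smult R I M"
    using cyclic_submodule_eq_ideal_smult[OF mm m(1)] .
  then have "\<not> I \<subseteq> {\<zero>}" using ideal_smult_zero_ideal mem_cyclic_submodule[OF m(1)] m(2) by auto
  then obtain a where a: "a \<in> I" "a \<noteq> \<zero>" by auto
  have ac: "a \<in> carrier R" using a ideal_subset[OF I(1)] by auto
  have "annihilator m = {\<zero>}" using tf m unfolding annihilator_def by auto
  moreover have "\<exists>d\<in>carrier R. a \<odot>\<^bsub>M\<^esub> y = d \<odot>\<^bsub>M\<^esub> m" if "y \<in> carrier M" for y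
    using ideal_smult.smult[OF a(1) that] I(2) unfolding cyclic_submodule_def by auto
  moreover have "inj_on (\<lambda>y. a \<odot>\<^bsub>M\<^esub> y) (carrier M)"
  proof (rule inj_onI)
    fix y y' assume y: "y \<in> carrier M" "y' \<in> carrier M" "a \<odot>\<^bsub>M\<^esub> y = a \<odot>\<^bsub>M\<^esub> y'"
    then have "a \<odot>\<^bsub>M\<^esub> (y \<oplus>\<^bsub>M\<^esub> \<ominus>\<^bsub>M\<^esub> y') = \<zero>\<^bsub>M\<^esub>"
      using ac by (simp add: smult_r_distr smult_r_minus M.minus_eq_zero_iff)
    then have "y \<oplus>\<^bsub>M\<^esub> \<ominus>\<^bsub>M\<^esub> y' = \<zero>\<^bsub>M\<^esub>" using tf a(2) ac y by auto
    then show "y = y'" using y M.minus_eq_zero_iff by simp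
  qed
  ultimately obtain K where "ideal K R" "a \<in> K" "module_isomorphic R M (ideal_module R K)"
    using iso_ideal_if_smult_embeds_in_free_cyclic[OF m(1) _ ac] by blast
  then show ?thesis using a(2) by blast
qed

lemma dedekind_multiplication_module_cases:
  assumes dd: "dedekind_domain R" and mr: "multiplication_ring R" and mm: "multiplication_module R M"
  shows "module_isomorphic R M (ideal_module R (carrier R)) \<or>
    (\<exists>I. ideal I R \<and> I \<noteq> {\<zero>} \<and> module_isomorphic R M (quotient_module R I)) \<or>
    (\<exists>I. ideal I R \<and> I \<noteq> {\<zero>} \<and> module_isomorphic R M (ideal_module R I))"
proof (cases "\<exists>t\<in>carrier M. \<exists>a\<in>carrier R. t \<noteq> \<zero>\<^bsub>M\<^esub> \<and> a \<noteq> \<zero> \<and> a \<odot>\<^bsub>M\<^esub> t = \<zero>\<^bsub>M\<^esub>")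
  case True
  then obtain x where "cyclic_generator R M x" using cyclic_if_dedekind_torsion[OF dd mr mm] by blast
  then show ?thesis using cyclic_module_iso_cases by blast
next
  case torsion_free: False
  show ?thesis
  proof (cases "\<exists>m\<in>carrier M. m \<noteq> \<zero>\<^bsub>M\<^esub>")
    case True
    then show ?thesis using iso_ideal_if_torsion_free[OF mm] torsion_free by blast
  next
    case False
    then have "cyclic_generator R M \<zero>\<^bsub>M\<^esub>" using cyclic_generator_zero_module by blast
    then show ?thesis using cyclic_module_iso_cases by blast
  qed
qed

end

section \<open>Multiplication modules over Artinian local principal ideal rings\<close>

context cring
begin

lemma artinian_power_stable:
  assumes art: "artinian_ring R" and p: "p \<in> carrier R"
  shows "\<exists>k::nat. p [^] k \<in> PIdl (p [^] Suc k)"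
proof (rule ccontr)
  assume unstable: "\<not> ?thesis"
  have "ideal (PIdl (p [^] k)) R \<and> PIdl (p [^] Suc k) \<subset> PIdl (p [^] k)" for k :: nat
  proof -
    have pk: "p [^] k \<in> carrier R" using p by simp
    have "p [^] Suc k = p \<otimes> p [^] k" using p by (simp add: m_comm)
    then have "p [^] Suc k \<in> PIdl (p [^] k)" using p unfolding cgenideal_def by blast
    then have "PIdl (p [^] Suc k) \<subseteq> PIdl (p [^] k)"
      by (rule cgenideal_minimal[OF cgenideal_ideal[OF pk]])
    moreover have "p [^] k \<in> PIdl (p [^] k)" by (rule cgenideal_self[OF pk])
    ultimately show ?thesis using cgenideal_ideal[OF pk] unstable by blast
  qed
  then have "\<exists>f :: nat \<Rightarrow> 'a set. \<forall>k. ideal (f k) R \<and> f (Suc k) \<subset> f k"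
    by (intro exI[of _ "\<lambda>k. PIdl (p [^] k)"]) simp
  then show False using art unfolding artinian_ring_def by simp
qed

lemma local_ring_proper_ideal_subset:
  assumes "local_ring R"
  obtains m where "maximalideal m R" "\<And>J. ideal J R \<Longrightarrow> J \<noteq> carrier R \<Longrightarrow> J \<subseteq> m"
proof -
  obtain m where m: "maximalideal m R" and uniq: "\<And>m'. maximalideal m' R \<Longrightarrow> m' = m"
    using assms unfolding local_ring_def by blast
  have "J \<subseteq> m" if "ideal J R" "J \<noteq> carrier R" for J
    using ideal_in_maximalideal[OF that] uniq by metis
  then show ?thesis using m that by blast
qed

text \<open>In a local ring \<open>1 - d \<pi>\<close> is a unit for \<open>\<pi>\<close> in the maximal ideal, so \<open>p = d p \<pi>\<close> forces
  \<open>p = 0\<close>.\<close>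

lemma local_stable_power_zero:
  assumes m: "maximalideal m R" and local: "\<And>J. ideal J R \<Longrightarrow> J \<noteq> carrier R \<Longrightarrow> J \<subseteq> m"
    and \<pi>: "\<pi> \<in> m" and d: "d \<in> carrier R" and p: "p \<in> carrier R" and stable: "p = d \<otimes> (p \<otimes> \<pi>)"
  shows "p = \<zero>"
proof -
  have mI: "ideal m R" using m maximalideal.axioms(1) by blast
  have \<pi>c: "\<pi> \<in> carrier R" using \<pi> ideal_subset[OF mI] by blast
  define w where "w = \<one> \<ominus> d \<otimes> \<pi>"
  have wc: "w \<in> carrier R" unfolding w_def using d \<pi>c by simp
  have "p \<otimes> w = p \<ominus> d \<otimes> (p \<otimes> \<pi>)"
    unfolding w_def using p d \<pi>c by (simp add: minus_eq r_distr r_minus m_lcomm)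
  then have pw: "p \<otimes> w = \<zero>" using stable p by (simp add: minus_eq r_neg)
  have "PIdl w = carrier R"
  proof (rule ccontr)
    assume "PIdl w \<noteq> carrier R"
    then have "w \<in> m" using local[OF cgenideal_ideal[OF wc]] cgenideal_self[OF wc] by blast
    moreover have "d \<otimes> \<pi> \<in> m" using ideal.I_l_closed[OF mI \<pi> d] .
    ultimately have "w \<oplus> d \<otimes> \<pi> \<in> m" by (rule ideal_add_closed[OF mI])
    moreover have "w \<oplus> d \<otimes> \<pi> = \<one>" unfolding w_def using d \<pi>c by (simp add: minus_eq a_assoc l_neg)
    ultimately show False using ideal.one_imp_carrier[OF mI] maximalideal.I_notcarr[OF m] by simp
  qed
  then obtain s where s: "s \<in> carrier R" "\<one> = s \<otimes> w" unfolding cgenideal_def by blast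
  have "p = p \<otimes> (s \<otimes> w)" using s p by (metis r_one)
  also have "\<dots> = s \<otimes> (p \<otimes> w)" using s p wc by (simp add: m_lcomm)
  finally show ?thesis using pw s by simp
qed

end

context module
begin

lemma mem_ideal_smult_cgenideal:
  assumes p: "p \<in> carrier R" and w: "w \<in> ideal_smult R (PIdl p) M"
  shows "\<exists>y\<in>carrier M. w = p \<odot>\<^bsub>M\<^esub> y"
  using w
proof induct
  case zero
  then show ?case using p by (auto intro!: bexI[of _ "\<zero>\<^bsub>M\<^esub>"])
next
  case (smult i m)
  then obtain c where c: "c \<in> carrier R" "i = c \<otimes> p" unfolding cgenideal_def by auto
  then have "i \<odot>\<^bsub>M\<^esub> m = p \<odot>\<^bsub>M\<^esub> (c \<odot>\<^bsub>M\<^esub> m)"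
    using p smult by (simp add: smult_assoc1[symmetric] R.m_comm)
  then show ?case using c smult by auto
next
  case (add x y)
  then obtain y1 y2 where y: "y1 \<in> carrier M" "y2 \<in> carrier M" "x = p \<odot>\<^bsub>M\<^esub> y1" "y = p \<odot>\<^bsub>M\<^esub> y2"
    by auto
  then have "x \<oplus>\<^bsub>M\<^esub> y = p \<odot>\<^bsub>M\<^esub> (y1 \<oplus>\<^bsub>M\<^esub> y2)" using p by (simp add: smult_r_distr)
  then show ?case using y by auto
qed

lemma divisible_by_powers:
  assumes p: "p \<in> carrier R" and div: "\<And>y. y \<in> carrier M \<Longrightarrow> y \<in> ideal_smult R (PIdl p) M"
    and y: "y \<in> carrier M"
  shows "\<exists>y'\<in>carrier M. y = (p [^]\<^bsub>R\<^esub> (k::nat)) \<odot>\<^bsub>M\<^esub> y'"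
  using y
proof (induct k arbitrary: y)
  case (Suc k)
  then obtain y' where y': "y' \<in> carrier M" "y = (p [^]\<^bsub>R\<^esub> k) \<odot>\<^bsub>M\<^esub> y'" by auto
  obtain y'' where y'': "y'' \<in> carrier M" "y' = p \<odot>\<^bsub>M\<^esub> y''"
    using mem_ideal_smult_cgenideal[OF p div[OF y'(1)]] by auto
  have "y = (p [^]\<^bsub>R\<^esub> Suc k) \<odot>\<^bsub>M\<^esub> y''" using y' y'' p by (simp add: smult_assoc1)
  then show ?case using y'' by auto
qed auto

lemma cyclic_generator_if_not_in_ideal_smult:
  assumes mm: "multiplication_module R M"
    and local: "\<And>J. ideal J R \<Longrightarrow> J \<noteq> carrier R \<Longrightarrow> J \<subseteq> m"
    and x: "x \<in> carrier M" "x \<notin> ideal_smult R m M"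
  shows "cyclic_generator R M x"
proof -
  obtain I where I: "ideal I R" "cyclic_submodule x = ideal_smult R I M"
    using cyclic_submodule_eq_ideal_smult[OF mm x(1)] .
  have "I = carrier R"
  proof (rule ccontr)
    assume "I \<noteq> carrier R"
    then have "I \<subseteq> m" by (rule local[OF I(1)])
    then have "ideal_smult R I M \<subseteq> ideal_smult R m M" by (rule ideal_smult_mono)
    then show False using I(2) mem_cyclic_submodule[OF x(1)] x(2) by blast
  qed
  then have "y \<in> cyclic_submodule x" if "y \<in> carrier M" for y
    using ideal_smult.smult[of \<one> I y M R] I(2) that by simp
  then show ?thesis using x(1) unfolding cyclic_generator_def cyclic_submodule_def by blast
qed

lemma cyclic_if_artinian_local_PIR:
  assumes art: "artinian_local_PIR R" and mm: "multiplication_module R M"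
  shows "\<exists>x. cyclic_generator R M x"
proof -
  obtain m where m: "maximalideal m R" and local: "\<And>J. ideal J R \<Longrightarrow> J \<noteq> carrier R \<Longrightarrow> J \<subseteq> m"
    using R.local_ring_proper_ideal_subset art unfolding artinian_local_PIR_def by blast
  have "principalideal m R"
    using art maximalideal.axioms(1)[OF m] unfolding artinian_local_PIR_def principal_ideal_ring_def by blast
  then obtain \<pi> where \<pi>: "\<pi> \<in> carrier R" "m = PIdl \<pi>"
    using principalideal.generate R.cgenideal_eq_genideal by metis
  show ?thesis
  proof (cases "\<exists>x\<in>carrier M. x \<notin> ideal_smult R m M")
    case True
    then show ?thesis using cyclic_generator_if_not_in_ideal_smult[OF mm local] by blast
  next
    case False
    obtain k :: nat where "\<pi> [^]\<^bsub>R\<^esub> k \<in> PIdl (\<pi> [^]\<^bsub>R\<^esub> Suc k)"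
      using R.artinian_power_stable \<pi>(1) art unfolding artinian_local_PIR_def by blast
    then obtain d where d: "d \<in> carrier R" "\<pi> [^]\<^bsub>R\<^esub> k = d \<otimes> (\<pi> [^]\<^bsub>R\<^esub> k \<otimes> \<pi>)"
      unfolding cgenideal_def by auto
    have "\<pi> [^]\<^bsub>R\<^esub> k = \<zero>"
      using R.local_stable_power_zero[OF m local _ d(1) _ d(2)] \<pi> R.cgenideal_self by simp
    then have "y = \<zero>\<^bsub>M\<^esub>" if "y \<in> carrier M" for y
      using divisible_by_powers[OF \<pi>(1) _ that, of k] False \<pi>(2) by auto
    then show ?thesis using cyclic_generator_zero_module by blast
  qed
qed

section \<open>Classification over a single factor\<close>

lemma multiplication_module_if_iso_cyclic:
  assumes "module_isomorphic R M T" "cyclic_generator R T g"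
  shows "multiplication_module R M"
proof -
  obtain f where "f \<in> module_iso R M T" using assms(1) unfolding module_isomorphic_def by blast
  then obtain x where "cyclic_generator R M x" using cyclic_generator_iso[OF module_axioms _ assms(2)] by blast
  then show ?thesis by (rule multiplication_module_if_cyclic)
qed

lemma multiplication_module_iff_cases:
  assumes mr: "multiplication_ring R" and D: "dedekind_domain R \<or> artinian_local_PIR R"
  shows "multiplication_module R M \<longleftrightarrow>
    module_isomorphic R M (ideal_module R (carrier R)) \<or>
    (\<exists>I. ideal I R \<and> I \<noteq> {\<zero>} \<and> module_isomorphic R M (quotient_module R I)) \<or>
    (dedekind_domain R \<and> (\<exists>I. ideal I R \<and> I \<noteq> {\<zero>} \<and> module_isomorphic R M (ideal_module R I)))"
    (is "_ \<longleftrightarrow> ?cases")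
proof
  assume mm: "multiplication_module R M"
  show ?cases
  proof (cases "dedekind_domain R")
    case True
    then show ?thesis using dedekind_multiplication_module_cases[OF _ mr mm] by blast
  next
    case False
    then show ?thesis using cyclic_if_artinian_local_PIR[OF _ mm] D cyclic_module_iso_cases by blast
  qed
next
  assume ?cases
  then show "multiplication_module R M"
  proof (elim disjE conjE exE)
    assume iso: "module_isomorphic R M (ideal_module R (carrier R))"
    have "cyclic_generator R (ideal_module R (carrier R)) \<one>"
      using cyclic_generator_ring_module[OF R.is_cring] by simp
    with iso show ?thesis by (rule multiplication_module_if_iso_cyclic)
  next
    fix I assume I: "ideal I R" and iso: "module_isomorphic R M (quotient_module R I)"
    have "cyclic_generator R (quotient_module R I) (I +> \<one>)"
      using cyclic_generator_quotient_module[OF R.is_cring I] by simp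
    with iso show ?thesis by (rule multiplication_module_if_iso_cyclic)
  next
    fix I assume "ideal I R" "module_isomorphic R M (ideal_module R I)"
    then obtain f where "f \<in> module_iso R M (ideal_module R I)" unfolding module_isomorphic_def by blast
    then show ?thesis using multiplication_module_if_iso_ideal[OF module_axioms \<open>ideal I R\<close> _ mr] by blast
  qed
qed

end

theorem theorem1p2:
  fixes R :: "('a, 'b) ring_scheme" and M :: "('a, 'c, 'd) module_scheme"
    and n :: nat and e :: "nat \<Rightarrow> 'a"
  assumes "cring R"
    and "multiplication_ring R"
    and "finite (minimal_primes R)"
    and "\<forall>i<n. e i \<in> carrier R \<and> e i \<otimes>\<^bsub>R\<^esub> e i = e i"
    and "\<forall>i<n. \<forall>j<n. i \<noteq> j \<longrightarrow> e i \<otimes>\<^bsub>R\<^esub> e j = \<zero>\<^bsub>R\<^esub>"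
    and "finsum R e {..<n} = \<one>\<^bsub>R\<^esub>"
    and "\<forall>i<n. dedekind_domain (component_ring R (e i)) \<or>
                artinian_local_PIR (component_ring R (e i))"
    and "module R M"
  shows "multiplication_module R M \<longleftrightarrow>
    (\<forall>i<n.
       module_isomorphic (component_ring R (e i)) (component_module M (e i))
          (ideal_module (component_ring R (e i)) (carrier (component_ring R (e i))))
     \<or> (\<exists>I. ideal I (component_ring R (e i)) \<and> I \<noteq> {\<zero>\<^bsub>R\<^esub>} \<and>
          module_isomorphic (component_ring R (e i)) (component_module M (e i))
            (quotient_module (component_ring R (e i)) I))
     \<or> (dedekind_domain (component_ring R (e i)) \<and>
        (\<exists>I. ideal I (component_ring R (e i)) \<and> I \<noteq> {\<zero>\<^bsub>R\<^esub>} \<and>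
          module_isomorphic (component_ring R (e i)) (component_module M (e i))
            (ideal_module (component_ring R (e i)) I))))"
proof -
  interpret idempotent_decomposition R n e
    using assms(1,4-6) by (simp add: idempotent_decomposition_def idempotent_decomposition_axioms_def)
  note component_cases = module.multiplication_module_iff_cases[OF
      module.module_component_module[OF assms(8) idempotent] multiplication_ring_component[OF assms(2) idempotent]]
  show ?thesis
    unfolding multiplication_module_iff_components[OF assms(8)] using assms(7) by (simp add: component_cases)
qed

end
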